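(* Let $\mathbb{T}$ be a geometric theory over $\Sigma$. Then the topological spaces $M_{\mathbb{T}}$ and $I_{\mathbb{T}}$ (with the logical topologies) are sober, i.e.\ every completely prime filter of open sets is the neighbourhood filter of a unique point.
   Context: Let $\Sigma$ be a single-sorted first-order signature with equality, $\kappa\geq|\Sigma|+\aleph_0$ an infinite cardinal, and $\mathbb{S}$ a fixed set of cardinality at least $\kappa$. An $\mathbb{S}$-indexed $\Sigma$-structure is one whose underlying set is a quotient $A/{\sim}$ of a subset $A\subseteq\mathbb{S}$ (elements $[a]$). $M_\Sigma$ is the set of all such structures and $I_\Sigma$ the set of all isomorphisms between them, with domain and codomain maps $d,c$. The logical topology on $M_\Sigma$ is the coarsest containing the sets $\{\mathbf{M}:[a]\in\mathbf{M}\}$ ($a\in\mathbb{S}$, meaning $a$ lies in the subset of which $\mathbf{M}$'s universe is a quotient), $\{\mathbf{M}:[\mathbf{a}]\in R^{\mathbf{M}}\}$ (each $n$-ary relation symbol $R$, including equality and nullary symbols, each $n$-tuple $\mathbf{a}$ from $\mathbb{S}$), and $\{\mathbf{M}:f^{\mathbf{M}}([\mathbf{a}])=[b]\}$ (each function symbol $f$). The logical topology on $I_\Sigma$ is the coarsest making $d,c$ continuous and containing all $\{\mathbf{f}:[a]\in d(\mathbf{f}),[b]\in c(\mathbf{f}),\mathbf{f}([a])=[b]\}$. $M_{\mathbb{T}}\subseteq M_\Sigma$ is the set of $\mathbb{S}$-indexed $\mathbb{T}$-models and $I_{\mathbb{T}}\subseteq I_\Sigma$ the isomorphisms between them, with subspace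 topologies. A completely prime filter of opens is a filter $F$ of open sets such that whenever a union $\bigcup\mathcal{S}$ of open sets lies in $F$, some member of $\mathcal{S}$ lies in $F$. *)

theory Defs
  imports "HOL-Analysis.Analysis"
begin

datatype 'f trm = Var nat | App 'f "'f trm list"

datatype ('r, 'f, 'i) gfm =
    GTop
  | GEq "'f trm" "'f trm"
  | GRel 'r "'f trm list"
  | GConj "('r, 'f, 'i) gfm" "('r, 'f, 'i) gfm"
  | GDisj "'i set" "'i \<Rightarrow> ('r, 'f, 'i) gfm"
  | GEx nat "('r, 'f, 'i) gfm"

fun fv_trm :: "'f trm \<Rightarrow> nat set" where
  "fv_trm (Var n) = {n}"
| "fv_trm (App f ts) = (\<Union>t\<in>set ts. fv_trm t)"

fun wf_trm :: "('f \<Rightarrow> nat) \<Rightarrow> 'f trm \<Rightarrow> bool" where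
  "wf_trm arF (Var n) = True"
| "wf_trm arF (App f ts) = (length ts = arF f \<and> (\<forall>t\<in>set ts. wf_trm arF t))"

primrec fv_fm :: "('r, 'f, 'i) gfm \<Rightarrow> nat set" where
  "fv_fm GTop = {}"
| "fv_fm (GEq t u) = fv_trm t \<union> fv_trm u"
| "fv_fm (GRel r ts) = (\<Union>t\<in>set ts. fv_trm t)"
| "fv_fm (GConj p q) = fv_fm p \<union> fv_fm q"
| "fv_fm (GDisj I F) = (\<Union>i\<in>I. fv_fm (F i))"
| "fv_fm (GEx x p) = fv_fm p - {x}"

primrec wf_fm :: "('r \<Rightarrow> nat) \<Rightarrow> ('f \<Rightarrow> nat) \<Rightarrow> ('r, 'f, 'i) gfm \<Rightarrow> bool" where
  "wf_fm arR arF GTop = True"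
| "wf_fm arR arF (GEq t u) = (wf_trm arF t \<and> wf_trm arF u)"
| "wf_fm arR arF (GRel r ts) = (length ts = arR r \<and> (\<forall>t\<in>set ts. wf_trm arF t))"
| "wf_fm arR arF (GConj p q) = (wf_fm arR arF p \<and> wf_fm arR arF q)"
| "wf_fm arR arF (GDisj I F) = (\<forall>i\<in>I. wf_fm arR arF (F i))"
| "wf_fm arR arF (GEx x p) = wf_fm arR arF p"

text \<open>A geometric sequent is a triple (context, antecedent, consequent); a geometric theory
  is a set of well-formed sequents whose free variables lie in the context.\<close>

type_synonym ('r, 'f, 'i) gseq = "nat list \<times> ('r, 'f, 'i) gfm \<times> ('r, 'f, 'i) gfm"

definition geometric_theory ::
  "('r \<Rightarrow> nat) \<Rightarrow> ('f \<Rightarrow> nat) \<Rightarrow> ('r, 'f, 'i) gseq set \<Rightarrow> bool" where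
  "geometric_theory arR arF T \<longleftrightarrow>
     (\<forall>(xs, p, q)\<in>T. wf_fm arR arF p \<and> wf_fm arR arF q \<and>
        fv_fm p \<union> fv_fm q \<subseteq> set xs)"

text \<open>An S-indexed structure: a subset A of S (idom), an equivalence relation on A (ieq);
  the elements are the classes [a]; relations are sets of tuples of classes, functions act
  on tuples of classes (and are canonically {} outside their domain).\<close>

record ('s, 'r, 'f) istr =
  idom :: "'s set"
  ieq  :: "'s rel"
  irel :: "'r \<Rightarrow> 's set list set"
  ifun :: "'f \<Rightarrow> 's set list \<Rightarrow> 's set"

definition univ :: "('s, 'r, 'f) istr \<Rightarrow> 's set set" where
  "univ M = idom M // ieq M"

definition cls :: "('s, 'r, 'f) istr \<Rightarrow> 's \<Rightarrow> 's set" where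
  "cls M a = ieq M `` {a}"

definition MSig :: "'s set \<Rightarrow> ('r \<Rightarrow> nat) \<Rightarrow> ('f \<Rightarrow> nat) \<Rightarrow> ('s, 'r, 'f) istr set" where
  "MSig S arR arF = {M. idom M \<subseteq> S \<and> equiv (idom M) (ieq M) \<and>
     (\<forall>r. irel M r \<subseteq> {xs. length xs = arR r \<and> set xs \<subseteq> univ M}) \<and>
     (\<forall>f xs. (length xs = arF f \<and> set xs \<subseteq> univ M \<longrightarrow> ifun M f xs \<in> univ M) \<and>
             (\<not> (length xs = arF f \<and> set xs \<subseteq> univ M) \<longrightarrow> ifun M f xs = {}))}"

record ('s, 'r, 'f) iiso =
  isrc :: "('s, 'r, 'f) istr"
  itgt :: "('s, 'r, 'f) istr"
  imap :: "'s set \<Rightarrow> 's set"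

definition is_iso :: "('r \<Rightarrow> nat) \<Rightarrow> ('f \<Rightarrow> nat) \<Rightarrow> ('s, 'r, 'f) istr \<Rightarrow> ('s, 'r, 'f) istr
    \<Rightarrow> ('s set \<Rightarrow> 's set) \<Rightarrow> bool" where
  "is_iso arR arF M N h \<longleftrightarrow>
     bij_betw h (univ M) (univ N) \<and> (\<forall>x. x \<notin> univ M \<longrightarrow> h x = {}) \<and>
     (\<forall>r xs. length xs = arR r \<and> set xs \<subseteq> univ M \<longrightarrow>
        (xs \<in> irel M r \<longleftrightarrow> map h xs \<in> irel N r)) \<and>
     (\<forall>f xs. length xs = arF f \<and> set xs \<subseteq> univ M \<longrightarrow>
        h (ifun M f xs) = ifun N f (map h xs))"

definition ISig_on :: "('s, 'r, 'f) istr set \<Rightarrow> ('r \<Rightarrow> nat) \<Rightarrow> ('f \<Rightarrow> nat)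
    \<Rightarrow> ('s, 'r, 'f) iiso set" where
  "ISig_on Ms arR arF = {g. isrc g \<in> Ms \<and> itgt g \<in> Ms \<and> is_iso arR arF (isrc g) (itgt g) (imap g)}"

abbreviation ISig :: "'s set \<Rightarrow> ('r \<Rightarrow> nat) \<Rightarrow> ('f \<Rightarrow> nat) \<Rightarrow> ('s, 'r, 'f) iiso set" where
  "ISig S arR arF \<equiv> ISig_on (MSig S arR arF) arR arF"

definition MSig_top :: "'s set \<Rightarrow> ('r \<Rightarrow> nat) \<Rightarrow> ('f \<Rightarrow> nat) \<Rightarrow> ('s, 'r, 'f) istr topology" where
  "MSig_top S arR arF = topology_generated_by
     ({MSig S arR arF}
      \<union> {{M \<in> MSig S arR arF. a \<in> idom M} | a. a \<in> S}
      \<union> {{M \<in> MSig S arR arF. a \<in> idom M \<and> b \<in> idom M \<and> (a, b) \<in> ieq M} | a b. a \<in> S \<and> b \<in> S}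
      \<union> {{M \<in> MSig S arR arF. set as \<subseteq> idom M \<and> map (cls M) as \<in> irel M r} | r as.
            length as = arR r \<and> set as \<subseteq> S}
      \<union> {{M \<in> MSig S arR arF. set as \<subseteq> idom M \<and> b \<in> idom M \<and> ifun M f (map (cls M) as) = cls M b}
            | f as b. length as = arF f \<and> set as \<subseteq> S \<and> b \<in> S})"

definition ISig_top :: "'s set \<Rightarrow> ('r \<Rightarrow> nat) \<Rightarrow> ('f \<Rightarrow> nat) \<Rightarrow> ('s, 'r, 'f) iiso topology" where
  "ISig_top S arR arF = topology_generated_by
     ({ISig S arR arF}
      \<union> {{g \<in> ISig S arR arF. isrc g \<in> U} | U. openin (MSig_top S arR arF) U}
      \<union> {{g \<in> ISig S arR arF. itgt g \<in> U} | U. openin (MSig_top S arR arF) U}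
      \<union> {{g \<in> ISig S arR arF. a \<in> idom (isrc g) \<and> b \<in> idom (itgt g) \<and>
              imap g (cls (isrc g) a) = cls (itgt g) b} | a b. a \<in> S \<and> b \<in> S})"

fun eval :: "('s, 'r, 'f) istr \<Rightarrow> (nat \<Rightarrow> 's set) \<Rightarrow> 'f trm \<Rightarrow> 's set" where
  "eval M v (Var n) = v n"
| "eval M v (App f ts) = ifun M f (map (eval M v) ts)"

primrec sat :: "('s, 'r, 'f) istr \<Rightarrow> (nat \<Rightarrow> 's set) \<Rightarrow> ('r, 'f, 'i) gfm \<Rightarrow> bool" where
  "sat M v GTop = True"
| "sat M v (GEq t u) = (eval M v t = eval M v u)"
| "sat M v (GRel r ts) = (map (eval M v) ts \<in> irel M r)"
| "sat M v (GConj p q) = (sat M v p \<and> sat M v q)"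
| "sat M v (GDisj I F) = (\<exists>i\<in>I. sat M v (F i))"
| "sat M v (GEx x p) = (\<exists>e\<in>univ M. sat M (v(x := e)) p)"

definition is_model :: "('s, 'r, 'f) istr \<Rightarrow> ('r, 'f, 'i) gseq set \<Rightarrow> bool" where
  "is_model M T \<longleftrightarrow>
     (\<forall>(xs, p, q)\<in>T. \<forall>v. (\<forall>x\<in>set xs. v x \<in> univ M) \<longrightarrow> sat M v p \<longrightarrow> sat M v q)"

definition MT :: "'s set \<Rightarrow> ('r \<Rightarrow> nat) \<Rightarrow> ('f \<Rightarrow> nat) \<Rightarrow> ('r, 'f, 'i) gseq set
    \<Rightarrow> ('s, 'r, 'f) istr set" where
  "MT S arR arF T = {M \<in> MSig S arR arF. is_model M T}"

definition IT :: "'s set \<Rightarrow> ('r \<Rightarrow> nat) \<Rightarrow> ('f \<Rightarrow> nat) \<Rightarrow> ('r, 'f, 'i) gseq set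
    \<Rightarrow> ('s, 'r, 'f) iiso set" where
  "IT S arR arF T = ISig_on (MT S arR arF T) arR arF"

definition completely_prime_filter :: "'a topology \<Rightarrow> 'a set set \<Rightarrow> bool" where
  "completely_prime_filter X F \<longleftrightarrow>
     F \<subseteq> {U. openin X U} \<and> topspace X \<in> F \<and>
     (\<forall>U V. U \<in> F \<longrightarrow> V \<in> F \<longrightarrow> U \<inter> V \<in> F) \<and>
     (\<forall>U V. U \<in> F \<longrightarrow> openin X V \<longrightarrow> U \<subseteq> V \<longrightarrow> V \<in> F) \<and>
     (\<forall>\<S>. (\<forall>U\<in>\<S>. openin X U) \<longrightarrow> \<Union>\<S> \<in> F \<longrightarrow> (\<exists>U\<in>\<S>. U \<in> F))"

definition sober :: "'a topology \<Rightarrow> bool" where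
  "sober X \<longleftrightarrow> (\<forall>F. completely_prime_filter X F \<longrightarrow>
     (\<exists>!x. x \<in> topspace X \<and> F = {U. openin X U \<and> x \<in> U}))"

end

theory Submission
  imports Defs
begin

text \<open>A completely prime filter \<open>F\<close> of opens of \<open>M\<^sub>T\<close> determines a structure: its elements
  are the indices \<open>a\<close> with \<open>{M. [a] \<in> M} \<in> F\<close>, two indices are identified when
  \<open>{M. [a] = [b]} \<in> F\<close>, and relations and functions are read off the subbasic opens in \<open>F\<close>.
  Complete primeness turns the unions that interpret existentials and disjunctions into
  existentials, so by induction on geometric formulas \<open>F\<close> contains the open set defined by
  an instance of a formula iff the structure satisfies that instance. Hence the structure is a
  model of \<open>T\<close> and \<open>F\<close> is its neighbourhood filter; uniqueness holds because subbasic opens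
  separate points. For \<open>I\<^sub>T\<close>, pushing \<open>F\<close> forward along the continuous maps \<open>d\<close> and \<open>c\<close>
  yields points \<open>M\<close> and \<open>N\<close> of \<open>M\<^sub>T\<close>, and the opens \<open>{f. f[a] = [b]}\<close> in \<open>F\<close> define an
  isomorphism \<open>M \<cong> N\<close>, which is the required point.\<close>

section \<open>Completely prime filters and sober spaces\<close>

locale cp_filter =
  fixes X :: "'a topology" and F :: "'a set set"
  assumes cpf: "completely_prime_filter X F"
begin

lemma openin_if_mem: "U \<in> F \<Longrightarrow> openin X U"
  using cpf unfolding completely_prime_filter_def by blast

lemma topspace_mem: "topspace X \<in> F"
  using cpf unfolding completely_prime_filter_def by blast

lemma mem_mono: "U \<in> F \<Longrightarrow> U \<subseteq> V \<Longrightarrow> openin X V \<Longrightarrow> V \<in> F"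
  using cpf unfolding completely_prime_filter_def by blast

lemma Int_mem_iff: "openin X U \<Longrightarrow> openin X V \<Longrightarrow> U \<inter> V \<in> F \<longleftrightarrow> U \<in> F \<and> V \<in> F"
  using cpf mem_mono[of "U \<inter> V"] unfolding completely_prime_filter_def by blast

lemma Union_memD: "(\<And>U. U \<in> \<U> \<Longrightarrow> openin X U) \<Longrightarrow> \<Union>\<U> \<in> F \<Longrightarrow> \<exists>U\<in>\<U>. U \<in> F"
  using cpf unfolding completely_prime_filter_def by auto

lemma UN_mem_iff:
  assumes "\<And>i. i \<in> I \<Longrightarrow> openin X (U i)"
  shows "(\<Union>i\<in>I. U i) \<in> F \<longleftrightarrow> (\<exists>i\<in>I. U i \<in> F)"
proof
  assume "(\<Union>i\<in>I. U i) \<in> F"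
  then show "\<exists>i\<in>I. U i \<in> F"
    using Union_memD[of "U ` I"] assms by blast
next
  assume "\<exists>i\<in>I. U i \<in> F"
  then obtain i where "i \<in> I" "U i \<in> F"
    by blast
  moreover have "openin X (\<Union>i\<in>I. U i)"
    using assms by blast
  ultimately show "(\<Union>i\<in>I. U i) \<in> F"
    by (blast intro: mem_mono)
qed

lemma empty_not_mem: "{} \<notin> F"
  using Union_memD[of "{}"] by auto

definition forces :: "('a \<Rightarrow> bool) \<Rightarrow> bool" where
  "forces P \<longleftrightarrow> {x \<in> topspace X. P x} \<in> F"

definition open_pred :: "('a \<Rightarrow> bool) \<Rightarrow> bool" where
  "open_pred P \<longleftrightarrow> openin X {x \<in> topspace X. P x}"

lemma forces_True: "forces (\<lambda>x. True)"
  unfolding forces_def using topspace_mem by simp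

lemma forces_nonempty: "forces P \<Longrightarrow> \<exists>x\<in>topspace X. P x"
  unfolding forces_def using empty_not_mem by (metis (mono_tags, lifting) Collect_empty_eq)

lemma forces_mono:
  "forces P \<Longrightarrow> (\<And>x. x \<in> topspace X \<Longrightarrow> P x \<Longrightarrow> Q x) \<Longrightarrow> open_pred Q \<Longrightarrow> forces Q"
  unfolding forces_def open_pred_def by (erule mem_mono) auto

lemma Collect_conj_topspace:
  "{x \<in> topspace X. P x \<and> Q x} = {x \<in> topspace X. P x} \<inter> {x \<in> topspace X. Q x}"
  by blast

lemma Collect_ex_topspace:
  "{x \<in> topspace X. \<exists>i\<in>I. P i x} = (\<Union>i\<in>I. {x \<in> topspace X. P i x})"
  by blast

lemma open_pred_conj: "open_pred P \<Longrightarrow> open_pred Q \<Longrightarrow> open_pred (\<lambda>x. P x \<and> Q x)"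
  unfolding open_pred_def Collect_conj_topspace by (rule openin_Int)

lemma forces_conj_iff:
  "open_pred P \<Longrightarrow> open_pred Q \<Longrightarrow> forces (\<lambda>x. P x \<and> Q x) \<longleftrightarrow> forces P \<and> forces Q"
  unfolding forces_def open_pred_def Collect_conj_topspace by (rule Int_mem_iff)

lemma open_pred_ex: "(\<And>i. i \<in> I \<Longrightarrow> open_pred (P i)) \<Longrightarrow> open_pred (\<lambda>x. \<exists>i\<in>I. P i x)"
  unfolding open_pred_def Collect_ex_topspace by (rule openin_clauses) blast

lemma forces_ex_iff:
  "(\<And>i. i \<in> I \<Longrightarrow> open_pred (P i)) \<Longrightarrow> forces (\<lambda>x. \<exists>i\<in>I. P i x) \<longleftrightarrow> (\<exists>i\<in>I. forces (P i))"
  unfolding forces_def open_pred_def Collect_ex_topspace by (rule UN_mem_iff)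

lemma not_forces_False: "\<not> forces (\<lambda>x. False)"
  unfolding forces_def using empty_not_mem by simp

lemma open_pred_const: "open_pred (\<lambda>x. c)"
  unfolding open_pred_def by (cases c) simp_all

lemma open_pred_ball:
  "finite I \<Longrightarrow> (\<And>i. i \<in> I \<Longrightarrow> open_pred (P i)) \<Longrightarrow> open_pred (\<lambda>x. \<forall>i\<in>I. P i x)"
  by (induction I rule: finite_induct) (simp_all add: open_pred_const open_pred_conj)

lemma forces_ball_iff:
  "finite I \<Longrightarrow> (\<And>i. i \<in> I \<Longrightarrow> open_pred (P i)) \<Longrightarrow>
    forces (\<lambda>x. \<forall>i\<in>I. P i x) \<longleftrightarrow> (\<forall>i\<in>I. forces (P i))"
  by (induction I rule: finite_induct) (simp_all add: forces_True forces_conj_iff open_pred_ball)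

lemma open_pred_list_all2:
  "(\<And>a b. open_pred (\<lambda>x. P x a b)) \<Longrightarrow> open_pred (\<lambda>x. list_all2 (P x) as bs)"
  by (induction as arbitrary: bs; case_tac bs) (simp_all add: open_pred_const open_pred_conj)

lemma forces_list_all2_iff:
  "(\<And>a b. open_pred (\<lambda>x. P x a b)) \<Longrightarrow>
    forces (\<lambda>x. list_all2 (P x) as bs) \<longleftrightarrow> list_all2 (\<lambda>a b. forces (\<lambda>x. P x a b)) as bs"
  by (induction as arbitrary: bs; case_tac bs)
    (simp_all add: forces_True not_forces_False forces_conj_iff open_pred_list_all2)

lemma forces_iff_on:
  assumes "forces W" "\<And>x. x \<in> topspace X \<Longrightarrow> W x \<Longrightarrow> P x \<longleftrightarrow> Q x"
    and "open_pred W" "open_pred P" "open_pred Q"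
  shows "forces P \<longleftrightarrow> forces Q"
proof -
  have "{x \<in> topspace X. W x \<and> P x} = {x \<in> topspace X. W x \<and> Q x}"
    using assms(2) by blast
  then have "forces (\<lambda>x. W x \<and> P x) \<longleftrightarrow> forces (\<lambda>x. W x \<and> Q x)"
    unfolding forces_def by simp
  then show ?thesis
    using assms(1,3-5) forces_conj_iff by blast
qed

definition agrees :: "'a \<Rightarrow> ('a \<Rightarrow> bool) \<Rightarrow> bool" where
  "agrees m P \<longleftrightarrow> open_pred P \<and> (forces P \<longleftrightarrow> P m)"

lemma agrees_const: "agrees m (\<lambda>x. c)"
  unfolding agrees_def by (cases c) (simp_all add: open_pred_const forces_True not_forces_False)

lemma agrees_conj: "agrees m P \<Longrightarrow> agrees m Q \<Longrightarrow> agrees m (\<lambda>x. P x \<and> Q x)"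
  unfolding agrees_def by (simp add: open_pred_conj forces_conj_iff)

lemma agrees_ex: "(\<And>i. i \<in> I \<Longrightarrow> agrees m (P i)) \<Longrightarrow> agrees m (\<lambda>x. \<exists>i\<in>I. P i x)"
  unfolding agrees_def by (simp add: open_pred_ex forces_ex_iff)

lemma agrees_ball:
  "finite I \<Longrightarrow> (\<And>i. i \<in> I \<Longrightarrow> agrees m (P i)) \<Longrightarrow> agrees m (\<lambda>x. \<forall>i\<in>I. P i x)"
  unfolding agrees_def by (simp add: open_pred_ball forces_ball_iff)

lemma agrees_list_all2:
  "(\<And>a b. a \<in> set as \<Longrightarrow> agrees m (\<lambda>x. P x a b)) \<Longrightarrow> agrees m (\<lambda>x. list_all2 (P x) as bs)"
  by (induction as arbitrary: bs; case_tac bs) (simp_all add: agrees_const agrees_conj)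

lemma agrees_cong:
  assumes "agrees m Q" and PQ: "\<And>x. x \<in> insert m (topspace X) \<Longrightarrow> P x \<longleftrightarrow> Q x"
  shows "agrees m P"
proof -
  have "{x \<in> topspace X. P x} = {x \<in> topspace X. Q x}"
    using PQ by blast
  then show ?thesis
    using assms unfolding agrees_def open_pred_def forces_def by simp
qed

end

lemma cp_filter_pushforward:
  assumes f: "continuous_map X Y f" and "cp_filter X F"
  shows "cp_filter Y {V. openin Y V \<and> {x \<in> topspace X. f x \<in> V} \<in> F}"
proof -
  interpret cp_filter X F by fact
  let ?pre = "\<lambda>V. {x \<in> topspace X. f x \<in> V}"
  let ?G = "{V. openin Y V \<and> ?pre V \<in> F}"
  have pre_open: "openin X (?pre V)" if "openin Y V" for V
    using f that by (rule openin_continuous_map_preimage)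
  have "?pre (topspace Y) = topspace X"
    using f by (auto simp: continuous_map_def)
  then have "topspace Y \<in> ?G"
    using topspace_mem by simp
  moreover have "U \<inter> V \<in> ?G" if "U \<in> ?G" "V \<in> ?G" for U V
    using that pre_open Int_mem_iff[of "?pre U" "?pre V"] by (auto simp: Collect_conj_topspace)
  moreover have "V \<in> ?G" if "U \<in> ?G" "openin Y V" "U \<subseteq> V" for U V
    using that pre_open mem_mono[of "?pre U" "?pre V"] by blast
  moreover have "\<exists>U\<in>\<U>. U \<in> ?G" if "\<forall>U\<in>\<U>. openin Y U" "\<Union>\<U> \<in> ?G" for \<U>
  proof -
    have "?pre (\<Union>\<U>) = (\<Union>U\<in>\<U>. ?pre U)"
      by blast
    then show ?thesis
      using that pre_open UN_mem_iff[of \<U> ?pre] by auto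
  qed
  ultimately show ?thesis
    unfolding cp_filter_def completely_prime_filter_def by blast
qed

lemma sober_cp_filter_point:
  "sober X \<Longrightarrow> cp_filter X F \<Longrightarrow> \<exists>x\<in>topspace X. \<forall>U. openin X U \<longrightarrow> (U \<in> F \<longleftrightarrow> x \<in> U)"
  unfolding sober_def cp_filter_def by (metis (mono_tags, lifting) mem_Collect_eq)

lemma continuous_map_sober_point:
  assumes "continuous_map X Y f" "sober Y" "cp_filter X F"
  shows "\<exists>y\<in>topspace Y. \<forall>V. openin Y V \<longrightarrow> ({x \<in> topspace X. f x \<in> V} \<in> F \<longleftrightarrow> y \<in> V)"
  using sober_cp_filter_point[OF assms(2) cp_filter_pushforward[OF assms(1,3)]] by simp

lemma cp_filter_generated_mem_iff:
  assumes "cp_filter (subtopology (topology_generated_by B) Y) F"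
    and basis: "\<forall>G\<in>B. G \<inter> Y \<in> F \<longleftrightarrow> x \<in> G"
    and "generate_topology_on B V"
  shows "V \<inter> Y \<in> F \<longleftrightarrow> x \<in> V"
proof -
  interpret cp_filter "subtopology (topology_generated_by B) Y" F by fact
  have generated_open: "openin (subtopology (topology_generated_by B) Y) (W \<inter> Y)"
    if "generate_topology_on B W" for W
    using that by (auto simp: openin_subtopology openin_topology_generated_by_iff)
  show ?thesis
    using assms(3)
  proof (induction rule: generate_topology_on.induct)
    case Empty
    show ?case
      using empty_not_mem by simp
  next
    case (Int U V)
    have "U \<inter> V \<inter> Y = (U \<inter> Y) \<inter> (V \<inter> Y)"
      by blast
    then show ?case
      using Int Int_mem_iff[of "U \<inter> Y" "V \<inter> Y"] generated_open by simp
  next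
    case (UN K)
    have "\<Union>K \<inter> Y = (\<Union>U\<in>K. U \<inter> Y)"
      by blast
    then show ?case
      using UN UN_mem_iff[of K "\<lambda>U. U \<inter> Y"] generated_open by simp
  next
    case (Basis G)
    then show ?case
      using basis by blast
  qed
qed

lemma sober_subtopology_generated_by:
  assumes "Y \<subseteq> \<Union>B"
    and T0: "\<And>x y. x \<in> Y \<Longrightarrow> y \<in> Y \<Longrightarrow> (\<forall>G\<in>B. x \<in> G \<longleftrightarrow> y \<in> G) \<Longrightarrow> x = y"
    and point: "\<And>F. cp_filter (subtopology (topology_generated_by B) Y) F \<Longrightarrow>
      \<exists>x\<in>Y. \<forall>G\<in>B. G \<inter> Y \<in> F \<longleftrightarrow> x \<in> G"
  shows "sober (subtopology (topology_generated_by B) Y)"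
  unfolding sober_def
proof (intro allI impI)
  let ?X = "subtopology (topology_generated_by B) Y"
  fix F
  assume "completely_prime_filter ?X F"
  then have cpf: "cp_filter ?X F"
    by (rule cp_filter.intro)
  have topspace: "topspace ?X = Y"
    using assms(1) by auto
  have open_iff: "openin ?X U \<longleftrightarrow> (\<exists>V. generate_topology_on B V \<and> U = V \<inter> Y)" for U
    by (auto simp: openin_subtopology openin_topology_generated_by_iff)
  obtain x where x: "x \<in> Y" "\<forall>G\<in>B. G \<inter> Y \<in> F \<longleftrightarrow> x \<in> G"
    using point[OF cpf] by blast
  have "U \<in> F \<longleftrightarrow> openin ?X U \<and> x \<in> U" for U
  proof (cases "openin ?X U")
    case True
    then obtain V where "generate_topology_on B V" "U = V \<inter> Y"
      unfolding open_iff by blast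
    then show ?thesis
      using cp_filter_generated_mem_iff[OF cpf x(2)] x(1) True by blast
  next
    case False
    then show ?thesis
      using cp_filter.openin_if_mem[OF cpf] by blast
  qed
  then have nhds: "F = {U. openin ?X U \<and> x \<in> U}"
    by blast
  show "\<exists>!x. x \<in> topspace ?X \<and> F = {U. openin ?X U \<and> x \<in> U}"
  proof (rule ex1I[of _ x])
    fix y
    assume y: "y \<in> topspace ?X \<and> F = {U. openin ?X U \<and> y \<in> U}"
    have "x \<in> G \<longleftrightarrow> y \<in> G" if "G \<in> B" for G
    proof -
      have "openin ?X (G \<inter> Y)"
        using that open_iff generate_topology_on.Basis by blast
      then show ?thesis
        using nhds y x(1) topspace by auto
    qed
    then show "y = x"
      using T0 x(1) y topspace by metis
  qed (use x nhds topspace in simp)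
qed

lemma inseparable_pred_iff:
  assumes "x \<in> A" "y \<in> A" "\<forall>G\<in>B. x \<in> G \<longleftrightarrow> y \<in> G" "{z \<in> A. P z} \<in> insert {} B"
  shows "P x \<longleftrightarrow> P y"
proof (cases "{z \<in> A. P z} = {}")
  case True
  then show ?thesis
    using assms(1,2) by blast
next
  case False
  then have "{z \<in> A. P z} \<in> B"
    using assms(4) by (simp only: insert_iff) simp
  then have "x \<in> {z \<in> A. P z} \<longleftrightarrow> y \<in> {z \<in> A. P z}"
    by (rule bspec[OF assms(3)])
  then show ?thesis
    using assms(1,2) by simp
qed

section \<open>Indexed structures and the logical topology\<close>

lemma univ_eq_image_cls: "univ M = cls M ` idom M"
  unfolding univ_def cls_def quotient_def by blast

lemma cls_in_univ: "a \<in> idom M \<Longrightarrow> cls M a \<in> univ M"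
  unfolding univ_eq_image_cls by blast

lemma lists_univ_eq_map_cls:
  assumes "set xs \<subseteq> univ M"
  obtains as where "set as \<subseteq> idom M" "xs = map (cls M) as"
proof -
  have "xs \<in> lists (cls M ` idom M)"
    using assms unfolding univ_eq_image_cls by blast
  then show thesis
    using that unfolding lists_image by blast
qed

abbreviation rel_cls :: "('s, 'r, 'f) istr \<Rightarrow> 'r \<Rightarrow> 's list \<Rightarrow> bool" where
  "rel_cls M r as \<equiv> map (cls M) as \<in> irel M r"

abbreviation fun_cls :: "('s, 'r, 'f) istr \<Rightarrow> 'f \<Rightarrow> 's list \<Rightarrow> 's \<Rightarrow> bool" where
  "fun_cls M f as b \<equiv> b \<in> idom M \<and> ifun M f (map (cls M) as) = cls M b"

context
  fixes S :: "'s set" and arR :: "'r \<Rightarrow> nat" and arF :: "'f \<Rightarrow> nat" and M :: "('s, 'r, 'f) istr"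
  assumes M: "M \<in> MSig S arR arF"
begin

lemma MSig_idom_subset: "idom M \<subseteq> S"
  using M unfolding MSig_def by blast

lemma MSig_equiv: "equiv (idom M) (ieq M)"
  using M unfolding MSig_def by blast

lemma MSig_irel: "xs \<in> irel M r \<Longrightarrow> length xs = arR r \<and> set xs \<subseteq> univ M"
  using M unfolding MSig_def by blast

lemma MSig_ifun: "length xs = arF f \<Longrightarrow> set xs \<subseteq> univ M \<Longrightarrow> ifun M f xs \<in> univ M"
  using M unfolding MSig_def by blast

lemma MSig_ifun_empty: "\<not> (length xs = arF f \<and> set xs \<subseteq> univ M) \<Longrightarrow> ifun M f xs = {}"
  using M unfolding MSig_def by blast

lemma ieq_idom: "(a, b) \<in> ieq M \<Longrightarrow> a \<in> idom M \<and> b \<in> idom M"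
  using MSig_equiv unfolding equiv_def refl_on_def by blast

lemma cls_eq_iff: "a \<in> idom M \<Longrightarrow> b \<in> idom M \<Longrightarrow> cls M a = cls M b \<longleftrightarrow> (a, b) \<in> ieq M"
  unfolding cls_def using MSig_equiv by (rule eq_equiv_class_iff)

lemma cls_empty_iff: "cls M a = {} \<longleftrightarrow> a \<notin> idom M"
  unfolding cls_def using MSig_equiv ieq_idom equiv_class_self by fastforce

lemma empty_notin_univ: "{} \<notin> univ M"
  using cls_empty_iff unfolding univ_eq_image_cls by blast

lemma cls_in_univ_iff: "cls M a \<in> univ M \<longleftrightarrow> a \<in> idom M"
  using cls_in_univ cls_empty_iff empty_notin_univ by metis

lemma ieq_refl: "a \<in> idom M \<Longrightarrow> (a, a) \<in> ieq M"
  using MSig_equiv by (auto elim: equivE dest: refl_onD)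

lemma ieq_sym: "(a, b) \<in> ieq M \<Longrightarrow> (b, a) \<in> ieq M"
  using MSig_equiv by (auto elim: equivE dest: symD)

lemma ieq_trans: "(a, b) \<in> ieq M \<Longrightarrow> (b, c) \<in> ieq M \<Longrightarrow> (a, c) \<in> ieq M"
  using MSig_equiv by (auto elim: equivE dest: transD)

lemma cls_eq_if_ieq: "(a, b) \<in> ieq M \<Longrightarrow> cls M a = cls M b"
  using cls_eq_iff ieq_idom by metis

lemma map_cls_eq_if_ieq:
  "list_all2 (\<lambda>a b. (a, b) \<in> ieq M) as bs \<Longrightarrow> map (cls M) as = map (cls M) bs"
  by (induction rule: list_all2_induct) (simp_all add: cls_eq_if_ieq)

lemma irel_cls_args: "rel_cls M r as \<Longrightarrow> length as = arR r \<and> set as \<subseteq> idom M"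
proof -
  assume "rel_cls M r as"
  then have "length (map (cls M) as) = arR r \<and> set (map (cls M) as) \<subseteq> univ M"
    by (rule MSig_irel)
  then show ?thesis
    using cls_in_univ_iff by auto
qed

lemma ifun_cls_args:
  assumes "b \<in> idom M" "ifun M f (map (cls M) as) = cls M b"
  shows "length as = arF f \<and> set as \<subseteq> idom M"
proof -
  have "ifun M f (map (cls M) as) \<noteq> {}"
    using assms cls_empty_iff by metis
  then have "length (map (cls M) as) = arF f \<and> set (map (cls M) as) \<subseteq> univ M"
    using MSig_ifun_empty by blast
  then show ?thesis
    using cls_in_univ_iff by auto
qed

end

definition MSig_subbasis :: "'s set \<Rightarrow> ('r \<Rightarrow> nat) \<Rightarrow> ('f \<Rightarrow> nat) \<Rightarrow> ('s, 'r, 'f) istr set set" where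
  "MSig_subbasis S arR arF =
     {MSig S arR arF}
      \<union> {{M \<in> MSig S arR arF. a \<in> idom M} | a. a \<in> S}
      \<union> {{M \<in> MSig S arR arF. a \<in> idom M \<and> b \<in> idom M \<and> (a, b) \<in> ieq M} | a b. a \<in> S \<and> b \<in> S}
      \<union> {{M \<in> MSig S arR arF. set as \<subseteq> idom M \<and> rel_cls M r as} | r as.
            length as = arR r \<and> set as \<subseteq> S}
      \<union> {{M \<in> MSig S arR arF. set as \<subseteq> idom M \<and> fun_cls M f as b}
            | f as b. length as = arF f \<and> set as \<subseteq> S \<and> b \<in> S}"

lemma MSig_top_eq_generated: "MSig_top S arR arF = topology_generated_by (MSig_subbasis S arR arF)"
  unfolding MSig_top_def MSig_subbasis_def ..

lemma MSig_subbasisE: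
  assumes "G \<in> MSig_subbasis S arR arF"
  obtains "G = MSig S arR arF"
  | a where "G = {M \<in> MSig S arR arF. a \<in> idom M}"
  | a b where "G = {M \<in> MSig S arR arF. a \<in> idom M \<and> b \<in> idom M \<and> (a, b) \<in> ieq M}"
  | r as where "G = {M \<in> MSig S arR arF. set as \<subseteq> idom M \<and> rel_cls M r as}"
  | f as b where
      "G = {M \<in> MSig S arR arF. set as \<subseteq> idom M \<and> fun_cls M f as b}"
  using assms unfolding MSig_subbasis_def by blast

lemma topspace_MSig_top: "topspace (MSig_top S arR arF) = MSig S arR arF"
  unfolding MSig_top_def by auto

lemma openin_MSig_subbasis:
  "G \<in> insert {} (MSig_subbasis S arR arF) \<Longrightarrow> openin (MSig_top S arR arF) G"
  unfolding MSig_top_eq_generated by (auto intro: topology_generated_by_Basis)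

text \<open>A subbasic condition can only hold for indices in \<open>S\<close> and argument lists of the right
  length, so the side conditions of the subbasis may be dropped at the cost of the empty set.\<close>

lemma MSig_subbasis_idom: "{M \<in> MSig S arR arF. a \<in> idom M} \<in> insert {} (MSig_subbasis S arR arF)"
proof (cases "a \<in> S")
  case True
  then show ?thesis
    unfolding MSig_subbasis_def by blast
next
  case False
  then have "{M \<in> MSig S arR arF. a \<in> idom M} = {}"
    using MSig_idom_subset by blast
  then show ?thesis
    by simp
qed

lemma MSig_subbasis_ieq: "{M \<in> MSig S arR arF. (a, b) \<in> ieq M} \<in> insert {} (MSig_subbasis S arR arF)"
proof (cases "a \<in> S \<and> b \<in> S")
  case True
  have "{M \<in> MSig S arR arF. (a, b) \<in> ieq M} =
      {M \<in> MSig S arR arF. a \<in> idom M \<and> b \<in> idom M \<and> (a, b) \<in> ieq M}"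
    by (auto dest: ieq_idom)
  moreover have "{M \<in> MSig S arR arF. a \<in> idom M \<and> b \<in> idom M \<and> (a, b) \<in> ieq M} \<in> MSig_subbasis S arR arF"
    using True unfolding MSig_subbasis_def by blast
  ultimately show ?thesis
    by simp
next
  case False
  then have "{M \<in> MSig S arR arF. (a, b) \<in> ieq M} = {}"
    using MSig_idom_subset by (blast dest: ieq_idom)
  then show ?thesis
    by simp
qed

lemma MSig_subbasis_irel:
  "{M \<in> MSig S arR arF. rel_cls M r as} \<in> insert {} (MSig_subbasis S arR arF)"
proof -
  have rel_D: "length as = arR r \<and> set as \<subseteq> idom M"
    if "M \<in> MSig S arR arF" "rel_cls M r as" for M
    by (rule irel_cls_args[OF that])
  show ?thesis
  proof (cases "length as = arR r \<and> set as \<subseteq> S")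
    case True
    have "{M \<in> MSig S arR arF. rel_cls M r as} =
        {M \<in> MSig S arR arF. set as \<subseteq> idom M \<and> rel_cls M r as}"
      using rel_D by blast
    moreover have "{M \<in> MSig S arR arF. set as \<subseteq> idom M \<and> rel_cls M r as} \<in> MSig_subbasis S arR arF"
      using True unfolding MSig_subbasis_def by blast
    ultimately show ?thesis
      by simp
  next
    case False
    then have "{M \<in> MSig S arR arF. rel_cls M r as} = {}"
      using rel_D MSig_idom_subset by blast
    then show ?thesis
      by simp
  qed
qed

lemma MSig_subbasis_ifun:
  "{M \<in> MSig S arR arF. fun_cls M f as b}
    \<in> insert {} (MSig_subbasis S arR arF)"
proof -
  have fun_D: "length as = arF f \<and> set as \<subseteq> idom M"
    if "M \<in> MSig S arR arF" "b \<in> idom M" "ifun M f (map (cls M) as) = cls M b" for M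
    by (rule ifun_cls_args[OF that])
  show ?thesis
  proof (cases "length as = arF f \<and> set as \<subseteq> S \<and> b \<in> S")
    case True
    have "{M \<in> MSig S arR arF. fun_cls M f as b} =
        {M \<in> MSig S arR arF. set as \<subseteq> idom M \<and> fun_cls M f as b}"
      using fun_D by blast
    moreover have "{M \<in> MSig S arR arF. set as \<subseteq> idom M \<and> fun_cls M f as b} \<in> MSig_subbasis S arR arF"
      using True unfolding MSig_subbasis_def by blast
    ultimately show ?thesis
      by simp
  next
    case False
    then have "{M \<in> MSig S arR arF. fun_cls M f as b} = {}"
      using fun_D MSig_idom_subset by blast
    then show ?thesis
      by simp
  qed
qed

lemma MSig_subbasis_T0:
  assumes N: "N \<in> MSig S arR arF" and N': "N' \<in> MSig S arR arF"
    and agree: "\<forall>G\<in>MSig_subbasis S arR arF. N \<in> G \<longleftrightarrow> N' \<in> G"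
  shows "N = N'"
proof -
  note agree_on = inseparable_pred_iff[OF N N' agree]
  have "a \<in> idom N \<longleftrightarrow> a \<in> idom N'" for a
    by (rule agree_on[OF MSig_subbasis_idom])
  then have idom: "idom N = idom N'"
    by blast
  have "(a, b) \<in> ieq N \<longleftrightarrow> (a, b) \<in> ieq N'" for a b
    by (rule agree_on[OF MSig_subbasis_ieq])
  then have ieq: "ieq N = ieq N'"
    by fast
  have cls: "cls N = cls N'"
    unfolding cls_def ieq ..
  have univ: "univ N = univ N'"
    unfolding univ_def idom ieq ..
  have irel_mem: "xs \<in> irel N r \<longleftrightarrow> xs \<in> irel N' r" for r xs
  proof (cases "set xs \<subseteq> univ N")
    case True
    then obtain as where "xs = map (cls N) as"
      by (rule lists_univ_eq_map_cls)
    moreover have "map (cls N) as \<in> irel N r \<longleftrightarrow> map (cls N') as \<in> irel N' r"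
      by (rule agree_on[OF MSig_subbasis_irel])
    ultimately show ?thesis
      using cls by simp
  next
    case False
    then have "xs \<notin> irel N r" "xs \<notin> irel N' r"
      using MSig_irel[OF N, of xs r] MSig_irel[OF N', of xs r] univ by auto
    then show ?thesis
      by simp
  qed
  have ifun: "ifun N f xs = ifun N' f xs" for f xs
  proof (cases "length xs = arF f \<and> set xs \<subseteq> univ N")
    case True
    then obtain as where as: "xs = map (cls N) as"
      using lists_univ_eq_map_cls[of xs N] by blast
    have "ifun N f xs \<in> cls N ` idom N"
      using MSig_ifun[OF N] True unfolding univ_eq_image_cls by blast
    then obtain b where b: "b \<in> idom N" "ifun N f xs = cls N b"
      by blast
    have "fun_cls N f as b \<longleftrightarrow> fun_cls N' f as b"
      by (rule agree_on[OF MSig_subbasis_ifun])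
    then show ?thesis
      using b as cls idom by simp
  next
    case False
    then have "\<not> (length xs = arF f \<and> set xs \<subseteq> univ N')"
      using univ by simp
    then show ?thesis
      using False MSig_ifun_empty[OF N] MSig_ifun_empty[OF N'] by simp
  qed
  have "irel N = irel N'" "ifun N = ifun N'"
    using irel_mem ifun by blast+
  then show ?thesis
    using idom ieq by (intro istr.equality) simp_all
qed

lemma eval_cong: "(\<And>x. x \<in> fv_trm t \<Longrightarrow> v x = v' x) \<Longrightarrow> eval M v t = eval M v' t"
proof (induction t)
  case (App f ts)
  then have "map (eval M v) ts = map (eval M v') ts"
    by auto
  then show ?case
    by (simp only: eval.simps)
qed simp

lemma sat_cong: "(\<And>x. x \<in> fv_fm \<phi> \<Longrightarrow> v x = v' x) \<Longrightarrow> sat M v \<phi> \<longleftrightarrow> sat M v' \<phi>"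
proof (induction \<phi> arbitrary: v v')
  case (GEq t u)
  have "eval M v t = eval M v' t" "eval M v u = eval M v' u"
    by (rule eval_cong, use GEq.prems in simp)+
  then show ?case
    by simp
next
  case (GRel r ts)
  have "map (eval M v) ts = map (eval M v') ts"
    by (rule map_cong[OF refl], rule eval_cong) (use GRel.prems in auto)
  then show ?case
    by (simp only: sat.simps)
next
  case (GConj p q)
  have "sat M v p \<longleftrightarrow> sat M v' p" "sat M v q \<longleftrightarrow> sat M v' q"
    by (rule GConj.IH, use GConj.prems in simp)+
  then show ?case
    by simp
next
  case (GDisj I G)
  have "sat M v (G i) \<longleftrightarrow> sat M v' (G i)" if "i \<in> I" for i
    by (rule GDisj.IH) (use GDisj.prems that in auto)
  then show ?case
    by simp
next
  case (GEx x p)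
  have "sat M (v(x := e)) p \<longleftrightarrow> sat M (v'(x := e)) p" for e
    by (rule GEx.IH) (use GEx.prems in auto)
  then show ?case
    by simp
qed simp_all

text \<open>Instances of terms and formulas whose variables in the finite set \<open>V\<close> are given by the
  indices \<open>w\<close>; requiring \<open>w ` V \<subseteq> idom M\<close> keeps the defined sets of structures open.\<close>

definition eval_cls :: "nat set \<Rightarrow> (nat \<Rightarrow> 's) \<Rightarrow> 'f trm \<Rightarrow> 's \<Rightarrow> ('s, 'r, 'f) istr \<Rightarrow> bool" where
  "eval_cls V w t b M \<longleftrightarrow> w ` V \<subseteq> idom M \<and> b \<in> idom M \<and> eval M (\<lambda>x. cls M (w x)) t = cls M b"

definition sat_cls :: "nat set \<Rightarrow> (nat \<Rightarrow> 's) \<Rightarrow> ('r, 'f, 'i) gfm \<Rightarrow> ('s, 'r, 'f) istr \<Rightarrow> bool" where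
  "sat_cls V w \<phi> M \<longleftrightarrow> w ` V \<subseteq> idom M \<and> sat M (\<lambda>x. cls M (w x)) \<phi>"

context
  fixes S :: "'s set" and arR :: "'r \<Rightarrow> nat" and arF :: "'f \<Rightarrow> nat" and M :: "('s, 'r, 'f) istr"
  assumes M: "M \<in> MSig S arR arF"
begin

lemma eval_in_univ:
  "wf_trm arF t \<Longrightarrow> fv_trm t \<subseteq> V \<Longrightarrow> w ` V \<subseteq> idom M \<Longrightarrow> eval M (\<lambda>x. cls M (w x)) t \<in> univ M"
proof (induction t)
  case (Var n)
  then show ?case
    by (auto intro: cls_in_univ)
next
  case (App f ts)
  then have "set (map (eval M (\<lambda>x. cls M (w x))) ts) \<subseteq> univ M"
    by auto
  then show ?case
    using MSig_ifun[OF M] App.prems(1) by simp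
qed

lemma eval_cls_Var:
  "n \<in> V \<Longrightarrow> eval_cls V w (Var n) b M \<longleftrightarrow> w ` V \<subseteq> idom M \<and> (w n, b) \<in> ieq M"
  unfolding eval_cls_def using cls_eq_iff[OF M] ieq_idom[OF M] by auto

lemma list_all2_eval_cls_iff:
  assumes "\<forall>t\<in>set ts. wf_trm arF t \<and> fv_trm t \<subseteq> V" "w ` V \<subseteq> idom M"
  shows "(\<exists>bs. list_all2 (\<lambda>t c. eval_cls V w t c M) ts bs \<and> P (map (cls M) bs)) \<longleftrightarrow>
    P (map (eval M (\<lambda>x. cls M (w x))) ts)"
proof
  assume "\<exists>bs. list_all2 (\<lambda>t c. eval_cls V w t c M) ts bs \<and> P (map (cls M) bs)"
  then obtain bs where bs: "list_all2 (\<lambda>t c. eval_cls V w t c M) ts bs" "P (map (cls M) bs)"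
    by blast
  have "list_all2 (\<lambda>t c. eval M (\<lambda>x. cls M (w x)) t = cls M c) ts bs"
    using bs(1) by (rule list.rel_mono_strong) (simp add: eval_cls_def)
  then have "map (eval M (\<lambda>x. cls M (w x))) ts = map (cls M) bs"
    unfolding list.rel_eq[symmetric] list_all2_map1 list_all2_map2 .
  then show "P (map (eval M (\<lambda>x. cls M (w x))) ts)"
    using bs(2) by simp
next
  assume P: "P (map (eval M (\<lambda>x. cls M (w x))) ts)"
  have "set (map (eval M (\<lambda>x. cls M (w x))) ts) \<subseteq> univ M"
    using assms eval_in_univ by auto
  then obtain bs where bs: "set bs \<subseteq> idom M" "map (eval M (\<lambda>x. cls M (w x))) ts = map (cls M) bs"
    by (rule lists_univ_eq_map_cls)
  then have "list_all2 (\<lambda>t c. eval M (\<lambda>x. cls M (w x)) t = cls M c) ts bs"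
    unfolding list.rel_eq[symmetric] list_all2_map1 list_all2_map2 by simp
  then have "list_all2 (\<lambda>t c. eval_cls V w t c M) ts bs"
    by (rule list.rel_mono_strong) (use assms(2) bs(1) in \<open>auto simp: eval_cls_def\<close>)
  then show "\<exists>bs. list_all2 (\<lambda>t c. eval_cls V w t c M) ts bs \<and> P (map (cls M) bs)"
    using P bs(2) by auto
qed

lemma eval_cls_App:
  assumes "\<forall>t\<in>set ts. wf_trm arF t \<and> fv_trm t \<subseteq> V"
  shows "eval_cls V w (App f ts) b M \<longleftrightarrow>
    w ` V \<subseteq> idom M \<and> (\<exists>bs. list_all2 (\<lambda>t c. eval_cls V w t c M) ts bs \<and> fun_cls M f bs b)"
proof (cases "w ` V \<subseteq> idom M")
  case True
  show ?thesis
    using list_all2_eval_cls_iff[OF assms True, where P = "\<lambda>xs. b \<in> idom M \<and> ifun M f xs = cls M b"]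
    unfolding eval_cls_def[of V w "App f ts" b M] using True by simp
qed (simp add: eval_cls_def)

lemma sat_cls_GEq:
  assumes "wf_trm arF t" "fv_trm t \<subseteq> V"
  shows "sat_cls V w (GEq t u) M \<longleftrightarrow> w ` V \<subseteq> idom M \<and> (\<exists>b. eval_cls V w t b M \<and> eval_cls V w u b M)"
proof -
  have "eval M (\<lambda>x. cls M (w x)) t \<in> cls M ` idom M" if "w ` V \<subseteq> idom M"
    using eval_in_univ[OF assms that] unfolding univ_eq_image_cls .
  then show ?thesis
    unfolding sat_cls_def eval_cls_def by auto
qed

lemma sat_cls_GRel:
  assumes "\<forall>t\<in>set ts. wf_trm arF t \<and> fv_trm t \<subseteq> V"
  shows "sat_cls V w (GRel r ts) M \<longleftrightarrow>
    w ` V \<subseteq> idom M \<and> (\<exists>bs. list_all2 (\<lambda>t c. eval_cls V w t c M) ts bs \<and> rel_cls M r bs)"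
proof (cases "w ` V \<subseteq> idom M")
  case True
  show ?thesis
    using list_all2_eval_cls_iff[OF assms True, where P = "\<lambda>xs. xs \<in> irel M r"]
    unfolding sat_cls_def using True by simp
qed (simp add: sat_cls_def)

lemma sat_cls_GEx:
  "sat_cls V w (GEx x p) M \<longleftrightarrow> w ` V \<subseteq> idom M \<and> (\<exists>b. sat_cls (insert x V) (w(x := b)) p M)"
proof -
  have upd: "(\<lambda>y. cls M ((w(x := b)) y)) = (\<lambda>y. cls M (w y))(x := cls M b)" for b
    by (auto simp: fun_eq_iff)
  show ?thesis
    unfolding sat_cls_def sat.simps univ_eq_image_cls upd by auto
qed

end

lemma MT_subset_MSig: "MT S arR arF T \<subseteq> MSig S arR arF"
  unfolding MT_def by blast

lemma topspace_MT: "topspace (subtopology (MSig_top S arR arF) (MT S arR arF T)) = MT S arR arF T"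
  using MT_subset_MSig[of S arR arF T] by (auto simp: topspace_MSig_top)

section \<open>The model determined by a filter on \<open>M\<^sub>T\<close>\<close>

locale MT_filter = cp_filter "subtopology (MSig_top S arR arF) (MT S arR arF T)" F
  for S :: "'s set" and arR :: "'r \<Rightarrow> nat" and arF :: "'f \<Rightarrow> nat"
    and T :: "('r, 'f, 'i) gseq set" and F :: "('s, 'r, 'f) istr set set"
begin

lemma open_pred_subbasis:
  assumes "{M \<in> MSig S arR arF. P M} \<in> insert {} (MSig_subbasis S arR arF)"
  shows "open_pred P"
proof -
  have "{N \<in> MT S arR arF T. P N} = {M \<in> MSig S arR arF. P M} \<inter> MT S arR arF T"
    using MT_subset_MSig by blast
  then show ?thesis
    unfolding open_pred_def topspace_MT
    using openin_MSig_subbasis[OF assms] by (simp add: openin_subtopology_Int)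
qed

lemmas open_pred_idom = open_pred_subbasis[OF MSig_subbasis_idom]
lemmas open_pred_ieq = open_pred_subbasis[OF MSig_subbasis_ieq]
lemmas open_pred_irel = open_pred_subbasis[OF MSig_subbasis_irel]
lemmas open_pred_ifun = open_pred_subbasis[OF MSig_subbasis_ifun]

lemma forces_mono_MSig:
  "forces P \<Longrightarrow> (\<And>N. N \<in> MSig S arR arF \<Longrightarrow> P N \<Longrightarrow> Q N) \<Longrightarrow> open_pred Q \<Longrightarrow> forces Q"
  using forces_mono MT_subset_MSig unfolding topspace_MT by blast

definition filter_cls :: "'s \<Rightarrow> 's set" where
  "filter_cls a = {b. forces (\<lambda>N. (a, b) \<in> ieq N)}"

text \<open>The value of a function is the set of all forced witnesses; these form a single class,
  so no choice of representatives is needed.\<close>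

definition filter_model :: "('s, 'r, 'f) istr" where
  "filter_model =
    \<lparr>idom = {a. forces (\<lambda>N. a \<in> idom N)},
     ieq = {(a, b). forces (\<lambda>N. (a, b) \<in> ieq N)},
     irel = (\<lambda>r. {map filter_cls as | as. forces (\<lambda>N. rel_cls N r as)}),
     ifun = (\<lambda>f xs. {b. \<exists>as. map filter_cls as = xs \<and> forces (\<lambda>N. fun_cls N f as b)})\<rparr>"

lemma idom_filter_model: "a \<in> idom filter_model \<longleftrightarrow> forces (\<lambda>N. a \<in> idom N)"
  unfolding filter_model_def by simp

lemma ieq_filter_model: "(a, b) \<in> ieq filter_model \<longleftrightarrow> forces (\<lambda>N. (a, b) \<in> ieq N)"
  unfolding filter_model_def by simp

lemma irel_filter_model:
  "xs \<in> irel filter_model r \<longleftrightarrow> (\<exists>as. xs = map filter_cls as \<and> forces (\<lambda>N. rel_cls N r as))"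
  unfolding filter_model_def by simp

lemma ifun_filter_model:
  "b \<in> ifun filter_model f xs \<longleftrightarrow> (\<exists>as. map filter_cls as = xs \<and> forces (\<lambda>N. fun_cls N f as b))"
  unfolding filter_model_def by simp

lemma cls_filter_model: "cls filter_model = filter_cls"
  unfolding cls_def filter_cls_def filter_model_def by auto

lemma forces_imp_ex_MSig: "forces P \<Longrightarrow> \<exists>N\<in>MSig S arR arF. P N"
  using forces_nonempty MT_subset_MSig unfolding topspace_MT by blast

lemma forces_idom:
  assumes "forces P" "\<And>N. N \<in> MSig S arR arF \<Longrightarrow> P N \<Longrightarrow> a \<in> idom N"
  shows "a \<in> idom filter_model"
  unfolding idom_filter_model by (rule forces_mono_MSig[OF assms open_pred_idom])

lemma equiv_filter_model: "equiv (idom filter_model) (ieq filter_model)"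
proof (rule equivI)
  show "ieq filter_model \<subseteq> idom filter_model \<times> idom filter_model"
  proof (safe)
    fix a b
    assume "(a, b) \<in> ieq filter_model"
    then have ab: "forces (\<lambda>N. (a, b) \<in> ieq N)"
      unfolding ieq_filter_model .
    show "a \<in> idom filter_model" "b \<in> idom filter_model"
      by (rule forces_idom[OF ab], blast dest: ieq_idom)+
  qed
  show "refl_on (idom filter_model) (ieq filter_model)"
  proof (rule refl_onI)
    fix a
    assume "a \<in> idom filter_model"
    then show "(a, a) \<in> ieq filter_model"
      unfolding ieq_filter_model idom_filter_model
      by (rule forces_mono_MSig[OF _ ieq_refl open_pred_ieq])
  qed
  show "sym (ieq filter_model)"
  proof (rule symI)
    fix a b
    assume "(a, b) \<in> ieq filter_model"
    then show "(b, a) \<in> ieq filter_model"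
      unfolding ieq_filter_model by (rule forces_mono_MSig[OF _ ieq_sym open_pred_ieq])
  qed
  show "trans (ieq filter_model)"
  proof (rule transI)
    fix a b c
    assume "(a, b) \<in> ieq filter_model" "(b, c) \<in> ieq filter_model"
    then have "forces (\<lambda>N. (a, b) \<in> ieq N \<and> (b, c) \<in> ieq N)"
      unfolding ieq_filter_model forces_conj_iff[OF open_pred_ieq open_pred_ieq] by simp
    then show "(a, c) \<in> ieq filter_model"
      unfolding ieq_filter_model by (rule forces_mono_MSig) (auto intro: ieq_trans open_pred_ieq)
  qed
qed

lemma fcls_self: "a \<in> idom filter_model \<Longrightarrow> a \<in> filter_cls a"
  using equiv_class_self[OF equiv_filter_model] unfolding cls_filter_model[symmetric] cls_def .

lemma forces_ieq_refl: "a \<in> idom filter_model \<Longrightarrow> forces (\<lambda>N. (a, a) \<in> ieq N)"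
  using equiv_filter_model unfolding ieq_filter_model[symmetric] by (auto elim: equivE dest: refl_onD)

lemma forces_ieq_sym: "forces (\<lambda>N. (a, b) \<in> ieq N) \<Longrightarrow> forces (\<lambda>N. (b, a) \<in> ieq N)"
  using equiv_filter_model unfolding ieq_filter_model[symmetric] by (auto elim: equivE dest: symD)

lemma forces_ieq_if_fcls_eq:
  assumes "a \<in> idom filter_model" "filter_cls a = filter_cls b"
  shows "forces (\<lambda>N. (a, b) \<in> ieq N)"
proof -
  have "a \<in> filter_cls b"
    using fcls_self[OF assms(1)] assms(2) by simp
  then show ?thesis
    unfolding filter_cls_def by (auto intro: forces_ieq_sym)
qed

lemma forces_list_ieq_if_map_fcls_eq:
  assumes "set as \<subseteq> idom filter_model" "map filter_cls as = map filter_cls bs"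
  shows "forces (\<lambda>N. list_all2 (\<lambda>a b. (a, b) \<in> ieq N) as bs)"
proof -
  have "list_all2 (\<lambda>a b. filter_cls a = filter_cls b) as bs"
    using assms(2) by (simp add: list_all2_map1 list_all2_map2 list.rel_eq[symmetric])
  then have "list_all2 (\<lambda>a b. forces (\<lambda>N. (a, b) \<in> ieq N)) as bs"
    by (rule list.rel_mono_strong) (use assms(1) forces_ieq_if_fcls_eq in blast)
  then show ?thesis
    unfolding forces_list_all2_iff[OF open_pred_ieq] .
qed

lemma open_pred_list_ieq: "open_pred (\<lambda>N. list_all2 (\<lambda>a b. (a, b) \<in> ieq N) as bs)"
  by (rule open_pred_list_all2) (rule open_pred_ieq)

lemma forces_rel_cls_idom: "forces (\<lambda>N. rel_cls N r as) \<Longrightarrow> set as \<subseteq> idom filter_model"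
  by (auto elim!: forces_idom dest!: irel_cls_args)

lemma forces_fun_cls_idom: "forces (\<lambda>N. fun_cls N f as b) \<Longrightarrow> set as \<subseteq> idom filter_model"
  by (auto elim!: forces_idom dest!: ifun_cls_args)

lemma forces_rel_cls_transport:
  assumes "forces (\<lambda>N. rel_cls N r bs)" "map filter_cls as = map filter_cls bs"
  shows "forces (\<lambda>N. rel_cls N r as)"
proof -
  have "forces (\<lambda>N. list_all2 (\<lambda>a b. (a, b) \<in> ieq N) bs as)"
    using forces_rel_cls_idom[OF assms(1)] assms(2)[symmetric] by (rule forces_list_ieq_if_map_fcls_eq)
  then have "forces (\<lambda>N. rel_cls N r bs \<and> list_all2 (\<lambda>a b. (a, b) \<in> ieq N) bs as)"
    using assms(1) forces_conj_iff[OF open_pred_irel open_pred_list_ieq] by simp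
  then show ?thesis
  proof (rule forces_mono_MSig)
    fix N
    assume "N \<in> MSig S arR arF" "rel_cls N r bs \<and> list_all2 (\<lambda>a b. (a, b) \<in> ieq N) bs as"
    then show "rel_cls N r as"
      using map_cls_eq_if_ieq by metis
  qed (rule open_pred_irel)
qed

lemma forces_rel_cls_iff: "forces (\<lambda>N. rel_cls N r as) \<longleftrightarrow> rel_cls filter_model r as"
proof
  assume "forces (\<lambda>N. rel_cls N r as)"
  then show "rel_cls filter_model r as"
    unfolding cls_filter_model by (auto simp: filter_model_def)
next
  assume "rel_cls filter_model r as"
  then obtain bs where "map filter_cls as = map filter_cls bs" "forces (\<lambda>N. rel_cls N r bs)"
    unfolding cls_filter_model by (auto simp: filter_model_def)
  then show "forces (\<lambda>N. rel_cls N r as)"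
    using forces_rel_cls_transport by blast
qed

lemma forces_fun_cls_transport:
  assumes "forces (\<lambda>N. fun_cls N f bs c)" "map filter_cls as = map filter_cls bs" "forces (\<lambda>N. (b, c) \<in> ieq N)"
  shows "forces (\<lambda>N. fun_cls N f as b)"
proof -
  have "forces (\<lambda>N. list_all2 (\<lambda>a b. (a, b) \<in> ieq N) bs as)"
    using forces_fun_cls_idom[OF assms(1)] assms(2)[symmetric] by (rule forces_list_ieq_if_map_fcls_eq)
  then have "forces (\<lambda>N. fun_cls N f bs c \<and> (list_all2 (\<lambda>a b. (a, b) \<in> ieq N) bs as \<and> (b, c) \<in> ieq N))"
    unfolding forces_conj_iff[OF open_pred_ifun open_pred_conj[OF open_pred_list_ieq open_pred_ieq]]
      forces_conj_iff[OF open_pred_list_ieq open_pred_ieq]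
    using assms(1,3) by blast
  then show ?thesis
  proof (rule forces_mono_MSig)
    fix N
    assume N: "N \<in> MSig S arR arF"
      and "fun_cls N f bs c \<and> (list_all2 (\<lambda>a b. (a, b) \<in> ieq N) bs as \<and> (b, c) \<in> ieq N)"
    then show "fun_cls N f as b"
      using map_cls_eq_if_ieq[OF N] cls_eq_if_ieq[OF N] ieq_idom[OF N] by metis
  qed (rule open_pred_ifun)
qed

lemma forces_fun_cls_unique:
  assumes "forces (\<lambda>N. fun_cls N f as b)" "forces (\<lambda>N. fun_cls N f as c)"
  shows "forces (\<lambda>N. (b, c) \<in> ieq N)"
proof -
  have "forces (\<lambda>N. fun_cls N f as b \<and> fun_cls N f as c)"
    unfolding forces_conj_iff[OF open_pred_ifun open_pred_ifun] using assms by blast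
  then show ?thesis
  proof (rule forces_mono_MSig)
    fix N
    assume "N \<in> MSig S arR arF" "fun_cls N f as b \<and> fun_cls N f as c"
    then show "(b, c) \<in> ieq N"
      using cls_eq_iff by metis
  qed (rule open_pred_ieq)
qed

lemma ifun_filter_model_eq:
  assumes b: "forces (\<lambda>N. fun_cls N f as b)"
  shows "ifun filter_model f (map filter_cls as) = filter_cls b"
proof (intro set_eqI iffI)
  fix c
  assume "c \<in> ifun filter_model f (map filter_cls as)"
  then obtain bs where bs: "map filter_cls bs = map filter_cls as" and c: "forces (\<lambda>N. fun_cls N f bs c)"
    unfolding ifun_filter_model by blast
  have "c \<in> idom filter_model"
    by (rule forces_idom[OF c]) simp
  then have "forces (\<lambda>N. fun_cls N f as c)"
    using forces_fun_cls_transport[OF c bs[symmetric]] forces_ieq_refl by blast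
  then show "c \<in> filter_cls b"
    unfolding filter_cls_def using forces_fun_cls_unique[OF b] by blast
next
  fix c
  assume "c \<in> filter_cls b"
  then have "forces (\<lambda>N. (c, b) \<in> ieq N)"
    unfolding filter_cls_def by (simp add: forces_ieq_sym)
  then have "forces (\<lambda>N. fun_cls N f as c)"
    by (rule forces_fun_cls_transport[OF b refl])
  then show "c \<in> ifun filter_model f (map filter_cls as)"
    unfolding ifun_filter_model by blast
qed

lemma forces_fun_cls_iff: "forces (\<lambda>N. fun_cls N f as b) \<longleftrightarrow> fun_cls filter_model f as b"
proof
  assume b: "forces (\<lambda>N. fun_cls N f as b)"
  have "b \<in> idom filter_model"
    by (rule forces_idom[OF b]) simp
  then show "fun_cls filter_model f as b"
    unfolding cls_filter_model ifun_filter_model_eq[OF b] by simp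
next
  assume "fun_cls filter_model f as b"
  then have "b \<in> ifun filter_model f (map filter_cls as)"
    using fcls_self unfolding cls_filter_model by simp
  then obtain bs where bs: "map filter_cls bs = map filter_cls as" and b: "forces (\<lambda>N. fun_cls N f bs b)"
    unfolding ifun_filter_model by blast
  have "b \<in> idom filter_model"
    by (rule forces_idom[OF b]) simp
  then show "forces (\<lambda>N. fun_cls N f as b)"
    using forces_fun_cls_transport[OF b bs[symmetric]] forces_ieq_refl by blast
qed

lemma forces_fun_cls_exists:
  assumes "set as \<subseteq> idom filter_model" "length as = arF f"
  shows "\<exists>b. forces (\<lambda>N. fun_cls N f as b)"
proof -
  have "\<forall>a\<in>set as. forces (\<lambda>N. a \<in> idom N)"
    using assms(1) idom_filter_model by blast
  moreover have "forces (\<lambda>N. \<forall>a\<in>set as. a \<in> idom N) \<longleftrightarrow> (\<forall>a\<in>set as. forces (\<lambda>N. a \<in> idom N))"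
    by (rule forces_ball_iff) (simp_all add: open_pred_idom)
  ultimately have "forces (\<lambda>N. \<forall>a\<in>set as. a \<in> idom N)"
    by blast
  then have "forces (\<lambda>N. \<exists>b\<in>UNIV. fun_cls N f as b)"
  proof (rule forces_mono_MSig)
    fix N
    assume N: "N \<in> MSig S arR arF" "\<forall>a\<in>set as. a \<in> idom N"
    have "set (map (cls N) as) \<subseteq> univ N"
      using N(2) cls_in_univ[of _ N] by auto
    then have "ifun N f (map (cls N) as) \<in> univ N"
      using MSig_ifun[OF N(1)] assms(2) by simp
    then show "\<exists>b\<in>UNIV. fun_cls N f as b"
      unfolding univ_eq_image_cls by auto
  next
    show "open_pred (\<lambda>N. \<exists>b\<in>UNIV. fun_cls N f as b)"
      by (rule open_pred_ex) (rule open_pred_ifun)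
  qed
  then show ?thesis
    unfolding forces_ex_iff[OF open_pred_ifun] by blast
qed

lemma univ_filter_model: "univ filter_model = filter_cls ` idom filter_model"
  unfolding univ_eq_image_cls cls_filter_model ..

lemma idom_filter_model_subset: "idom filter_model \<subseteq> S"
proof
  fix a
  assume "a \<in> idom filter_model"
  then obtain N where "N \<in> MSig S arR arF" "a \<in> idom N"
    using forces_imp_ex_MSig unfolding idom_filter_model by blast
  then show "a \<in> S"
    using MSig_idom_subset by blast
qed

lemma irel_filter_model_args:
  assumes "xs \<in> irel filter_model r"
  shows "length xs = arR r \<and> set xs \<subseteq> univ filter_model"
proof -
  obtain as where as: "xs = map filter_cls as" and rel: "forces (\<lambda>N. rel_cls N r as)"
    using assms unfolding irel_filter_model by blast
  obtain N where "N \<in> MSig S arR arF" "rel_cls N r as"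
    using forces_imp_ex_MSig[OF rel] by blast
  then have "length as = arR r"
    using irel_cls_args by metis
  then show ?thesis
    using forces_rel_cls_idom[OF rel] unfolding as univ_filter_model by auto
qed

lemma ifun_filter_model_univ:
  assumes "length xs = arF f" "set xs \<subseteq> univ filter_model"
  shows "ifun filter_model f xs \<in> univ filter_model"
proof -
  obtain as where as: "set as \<subseteq> idom filter_model" "xs = map filter_cls as"
    using lists_univ_eq_map_cls[OF assms(2)] unfolding cls_filter_model by blast
  moreover have "length as = arF f"
    using assms(1) as(2) by simp
  ultimately obtain b where "forces (\<lambda>N. fun_cls N f as b)"
    using forces_fun_cls_exists by blast
  then have "b \<in> idom filter_model" "ifun filter_model f xs = filter_cls b"
    unfolding forces_fun_cls_iff cls_filter_model as(2) by auto
  then show ?thesis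
    unfolding univ_filter_model by blast
qed

lemma ifun_filter_model_empty:
  assumes "\<not> (length xs = arF f \<and> set xs \<subseteq> univ filter_model)"
  shows "ifun filter_model f xs = {}"
proof (rule ccontr)
  assume "ifun filter_model f xs \<noteq> {}"
  then obtain b where "b \<in> ifun filter_model f xs"
    by blast
  then obtain as where as: "xs = map filter_cls as" and b: "forces (\<lambda>N. fun_cls N f as b)"
    unfolding ifun_filter_model by blast
  obtain N where "N \<in> MSig S arR arF" "fun_cls N f as b"
    using forces_imp_ex_MSig[OF b] by blast
  then have "length as = arF f"
    using ifun_cls_args by metis
  then show False
    using assms forces_fun_cls_idom[OF b] unfolding as univ_filter_model by auto
qed

lemma filter_model_MSig: "filter_model \<in> MSig S arR arF"
  unfolding MSig_def
  using idom_filter_model_subset equiv_filter_model irel_filter_model_args ifun_filter_model_univ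
    ifun_filter_model_empty
  by blast

lemma agrees_cong_MSig:
  assumes "agrees filter_model Q" "\<And>N. N \<in> MSig S arR arF \<Longrightarrow> P N \<longleftrightarrow> Q N"
  shows "agrees filter_model P"
proof (rule agrees_cong[OF assms(1)])
  fix N
  assume "N \<in> insert filter_model (topspace (subtopology (MSig_top S arR arF) (MT S arR arF T)))"
  then have "N \<in> MSig S arR arF"
    using filter_model_MSig MT_subset_MSig unfolding topspace_MT by blast
  then show "P N \<longleftrightarrow> Q N"
    by (rule assms(2))
qed

lemma agrees_idom: "agrees filter_model (\<lambda>N. a \<in> idom N)"
  unfolding agrees_def using open_pred_idom idom_filter_model by blast

lemma agrees_ieq: "agrees filter_model (\<lambda>N. (a, b) \<in> ieq N)"
  unfolding agrees_def using open_pred_ieq ieq_filter_model by blast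

lemma agrees_rel_cls: "agrees filter_model (\<lambda>N. rel_cls N r as)"
  unfolding agrees_def using open_pred_irel forces_rel_cls_iff by blast

lemma agrees_fun_cls: "agrees filter_model (\<lambda>N. fun_cls N f as b)"
  unfolding agrees_def using open_pred_ifun forces_fun_cls_iff by blast

lemma agrees_subset_idom: "finite A \<Longrightarrow> agrees filter_model (\<lambda>N. A \<subseteq> idom N)"
  unfolding subset_eq by (rule agrees_ball) (simp_all add: agrees_idom)

lemma agrees_eval_cls:
  "wf_trm arF t \<Longrightarrow> fv_trm t \<subseteq> V \<Longrightarrow> finite V \<Longrightarrow> agrees filter_model (eval_cls V w t b)"
proof (induction t arbitrary: b)
  case (Var n)
  have "agrees filter_model (\<lambda>N. w ` V \<subseteq> idom N \<and> (w n, b) \<in> ieq N)"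
    using Var.prems(3) by (intro agrees_conj agrees_subset_idom finite_imageI agrees_ieq)
  then show ?case
    by (rule agrees_cong_MSig) (use Var.prems in \<open>simp add: eval_cls_Var\<close>)
next
  case (App f ts)
  have "agrees filter_model (\<lambda>N. w ` V \<subseteq> idom N \<and>
      (\<exists>bs\<in>UNIV. list_all2 (\<lambda>t c. eval_cls V w t c N) ts bs \<and> fun_cls N f bs b))"
    using App by (intro agrees_conj agrees_subset_idom finite_imageI agrees_ex agrees_list_all2 agrees_fun_cls) auto
  then show ?case
  proof (rule agrees_cong_MSig)
    fix N
    assume "N \<in> MSig S arR arF"
    then show "eval_cls V w (App f ts) b N \<longleftrightarrow> w ` V \<subseteq> idom N \<and>
        (\<exists>bs\<in>UNIV. list_all2 (\<lambda>t c. eval_cls V w t c N) ts bs \<and> fun_cls N f bs b)"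
      using App.prems by (subst eval_cls_App) auto
  qed
qed

lemma agrees_sat_cls:
  "wf_fm arR arF \<phi> \<Longrightarrow> fv_fm \<phi> \<subseteq> V \<Longrightarrow> finite V \<Longrightarrow> agrees filter_model (sat_cls V w \<phi>)"
proof (induction \<phi> arbitrary: V w)
  case GTop
  then show ?case
    using agrees_subset_idom by (simp add: sat_cls_def)
next
  case (GEq t u)
  have "agrees filter_model (\<lambda>N. w ` V \<subseteq> idom N \<and> (\<exists>b\<in>UNIV. eval_cls V w t b N \<and> eval_cls V w u b N))"
    using GEq by (intro agrees_conj agrees_subset_idom finite_imageI agrees_ex agrees_eval_cls) auto
  then show ?case
  proof (rule agrees_cong_MSig)
    fix N
    assume "N \<in> MSig S arR arF"
    then show "sat_cls V w (GEq t u) N \<longleftrightarrow>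
        w ` V \<subseteq> idom N \<and> (\<exists>b\<in>UNIV. eval_cls V w t b N \<and> eval_cls V w u b N)"
      using GEq.prems by (subst sat_cls_GEq) auto
  qed
next
  case (GRel r ts)
  have "agrees filter_model (\<lambda>N. w ` V \<subseteq> idom N \<and>
      (\<exists>bs\<in>UNIV. list_all2 (\<lambda>t c. eval_cls V w t c N) ts bs \<and> rel_cls N r bs))"
    using GRel by (intro agrees_conj agrees_subset_idom finite_imageI agrees_ex agrees_list_all2 agrees_eval_cls
        agrees_rel_cls) auto
  then show ?case
  proof (rule agrees_cong_MSig)
    fix N
    assume "N \<in> MSig S arR arF"
    then show "sat_cls V w (GRel r ts) N \<longleftrightarrow> w ` V \<subseteq> idom N \<and>
        (\<exists>bs\<in>UNIV. list_all2 (\<lambda>t c. eval_cls V w t c N) ts bs \<and> rel_cls N r bs)"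
      using GRel.prems by (subst sat_cls_GRel) auto
  qed
next
  case (GConj p q)
  have "agrees filter_model (\<lambda>N. sat_cls V w p N \<and> sat_cls V w q N)"
    using GConj by (intro agrees_conj) auto
  then show ?case
    by (rule agrees_cong_MSig) (auto simp: sat_cls_def)
next
  case (GDisj I G)
  have "agrees filter_model (\<lambda>N. w ` V \<subseteq> idom N \<and> (\<exists>i\<in>I. sat_cls V w (G i) N))"
    using GDisj by (intro agrees_conj agrees_subset_idom finite_imageI agrees_ex GDisj.IH) auto
  then show ?case
    by (rule agrees_cong_MSig) (auto simp: sat_cls_def)
next
  case (GEx x p)
  have "agrees filter_model (\<lambda>N. w ` V \<subseteq> idom N \<and> (\<exists>b\<in>UNIV. sat_cls (insert x V) (w(x := b)) p N))"
    using GEx by (intro agrees_conj agrees_subset_idom finite_imageI agrees_ex GEx.IH) auto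
  then show ?case
    by (rule agrees_cong_MSig) (simp add: sat_cls_GEx)
qed

lemma filter_model_is_model:
  assumes "geometric_theory arR arF T"
  shows "is_model filter_model T"
  unfolding is_model_def
proof (clarify)
  fix xs p q v
  assume "(xs, p, q) \<in> T" and v: "\<forall>x\<in>set xs. v x \<in> univ filter_model" and p: "sat filter_model v p"
  then have seq: "(xs, p, q) \<in> T" and wf: "wf_fm arR arF p" "wf_fm arR arF q"
    and fv: "fv_fm p \<subseteq> set xs" "fv_fm q \<subseteq> set xs"
    using assms unfolding geometric_theory_def by fastforce+
  have "\<forall>x\<in>set xs. \<exists>a. a \<in> idom filter_model \<and> v x = cls filter_model a"
    using v unfolding univ_eq_image_cls by blast
  then obtain w where w: "\<forall>x\<in>set xs. w x \<in> idom filter_model \<and> v x = cls filter_model (w x)"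
    by (rule bchoice[THEN exE])
  have sat_w: "sat filter_model v \<phi> \<longleftrightarrow> sat_cls (set xs) w \<phi> filter_model"
    if \<phi>: "fv_fm \<phi> \<subseteq> set xs" for \<phi>
  proof -
    have "sat filter_model v \<phi> \<longleftrightarrow> sat filter_model (\<lambda>x. cls filter_model (w x)) \<phi>"
      by (rule sat_cong) (use w \<phi> in auto)
    moreover have "w ` set xs \<subseteq> idom filter_model"
      using w by auto
    ultimately show ?thesis
      by (simp add: sat_cls_def)
  qed
  have "forces (sat_cls (set xs) w p)"
    using agrees_sat_cls[OF wf(1) fv(1)] p sat_w[OF fv(1)] unfolding agrees_def by simp
  then have "forces (sat_cls (set xs) w q)"
  proof (rule forces_mono)
    fix N
    assume "N \<in> topspace (subtopology (MSig_top S arR arF) (MT S arR arF T))" "sat_cls (set xs) w p N"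
    then show "sat_cls (set xs) w q N"
      using seq unfolding topspace_MT MT_def is_model_def sat_cls_def
      by (fastforce intro: cls_in_univ)
  qed (use agrees_sat_cls[OF wf(2) fv(2)] in \<open>simp add: agrees_def\<close>)
  then show "sat filter_model v q"
    using agrees_sat_cls[OF wf(2) fv(2)] sat_w[OF fv(2)] unfolding agrees_def by simp
qed

lemma filter_model_MT: "geometric_theory arR arF T \<Longrightarrow> filter_model \<in> MT S arR arF T"
  unfolding MT_def using filter_model_MSig filter_model_is_model by blast

lemma MSig_subbasis_mem_iff:
  assumes "G \<in> MSig_subbasis S arR arF"
  shows "G \<inter> MT S arR arF T \<in> F \<longleftrightarrow> filter_model \<in> G"
proof -
  have iff: "{M \<in> MSig S arR arF. P M} \<inter> MT S arR arF T \<in> F \<longleftrightarrow> filter_model \<in> {M \<in> MSig S arR arF. P M}"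
    if "agrees filter_model P" for P
  proof -
    have "{M \<in> MSig S arR arF. P M} \<inter> MT S arR arF T = {N \<in> MT S arR arF T. P N}"
      using MT_subset_MSig by blast
    then show ?thesis
      using that filter_model_MSig unfolding agrees_def forces_def topspace_MT by simp
  qed
  from assms show ?thesis
  proof (cases rule: MSig_subbasisE)
    case 1
    then show ?thesis
      using iff[of "\<lambda>M. True"] agrees_const by simp
  qed (simp_all add: iff agrees_conj agrees_idom agrees_ieq agrees_subset_idom agrees_rel_cls agrees_fun_cls)
qed

end

theorem sober_MT:
  assumes "geometric_theory arR arF T"
  shows "sober (subtopology (MSig_top S arR arF) (MT S arR arF T))"
  unfolding MSig_top_eq_generated
proof (rule sober_subtopology_generated_by)
  have "MSig S arR arF \<in> MSig_subbasis S arR arF"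
    unfolding MSig_subbasis_def by blast
  then have "MSig S arR arF \<subseteq> \<Union> (MSig_subbasis S arR arF)"
    by (rule Union_upper)
  then show "MT S arR arF T \<subseteq> \<Union> (MSig_subbasis S arR arF)"
    by (rule subset_trans[OF MT_subset_MSig])
next
  fix N N'
  assume "N \<in> MT S arR arF T" "N' \<in> MT S arR arF T"
    and agree: "\<forall>G\<in>MSig_subbasis S arR arF. N \<in> G \<longleftrightarrow> N' \<in> G"
  then show "N = N'"
    by (intro MSig_subbasis_T0[OF _ _ agree] subsetD[OF MT_subset_MSig])
next
  fix F
  assume "cp_filter (subtopology (topology_generated_by (MSig_subbasis S arR arF)) (MT S arR arF T)) F"
  then interpret MT_filter S arR arF T F
    unfolding MT_filter_def MSig_top_eq_generated .
  show "\<exists>N\<in>MT S arR arF T. \<forall>G\<in>MSig_subbasis S arR arF. G \<inter> MT S arR arF T \<in> F \<longleftrightarrow> N \<in> G"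
    using filter_model_MT[OF assms] MSig_subbasis_mem_iff by blast
qed

section \<open>The isomorphism determined by a filter on \<open>I\<^sub>T\<close>\<close>

abbreviation maps_cls :: "('s, 'r, 'f) iiso \<Rightarrow> 's \<Rightarrow> 's \<Rightarrow> bool" where
  "maps_cls g a b \<equiv> a \<in> idom (isrc g) \<and> b \<in> idom (itgt g) \<and> imap g (cls (isrc g) a) = cls (itgt g) b"

definition ISig_subbasis :: "'s set \<Rightarrow> ('r \<Rightarrow> nat) \<Rightarrow> ('f \<Rightarrow> nat) \<Rightarrow> ('s, 'r, 'f) iiso set set" where
  "ISig_subbasis S arR arF =
     {ISig S arR arF}
      \<union> {{g \<in> ISig S arR arF. isrc g \<in> U} | U. openin (MSig_top S arR arF) U}
      \<union> {{g \<in> ISig S arR arF. itgt g \<in> U} | U. openin (MSig_top S arR arF) U}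
      \<union> {{g \<in> ISig S arR arF. maps_cls g a b} | a b. a \<in> S \<and> b \<in> S}"

lemma ISig_top_eq_generated: "ISig_top S arR arF = topology_generated_by (ISig_subbasis S arR arF)"
  unfolding ISig_top_def ISig_subbasis_def ..

lemma ISig_subbasisE:
  assumes "G \<in> ISig_subbasis S arR arF"
  obtains "G = ISig S arR arF"
  | U where "openin (MSig_top S arR arF) U" "G = {g \<in> ISig S arR arF. isrc g \<in> U}"
  | U where "openin (MSig_top S arR arF) U" "G = {g \<in> ISig S arR arF. itgt g \<in> U}"
  | a b where "G = {g \<in> ISig S arR arF. maps_cls g a b}"
  using assms unfolding ISig_subbasis_def by blast

lemma ISig_subbasis_isrc: "openin (MSig_top S arR arF) U \<Longrightarrow> {g \<in> ISig S arR arF. isrc g \<in> U} \<in> ISig_subbasis S arR arF"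
  unfolding ISig_subbasis_def by blast

lemma ISig_subbasis_itgt: "openin (MSig_top S arR arF) U \<Longrightarrow> {g \<in> ISig S arR arF. itgt g \<in> U} \<in> ISig_subbasis S arR arF"
  unfolding ISig_subbasis_def by blast

lemma ISig_MSig: "g \<in> ISig S arR arF \<Longrightarrow> isrc g \<in> MSig S arR arF \<and> itgt g \<in> MSig S arR arF"
  unfolding ISig_on_def by blast

lemma ISig_is_iso: "g \<in> ISig S arR arF \<Longrightarrow> is_iso arR arF (isrc g) (itgt g) (imap g)"
  unfolding ISig_on_def by blast

lemma openin_ISig_subbasis:
  "G \<in> insert {} (ISig_subbasis S arR arF) \<Longrightarrow> openin (ISig_top S arR arF) G"
  unfolding ISig_top_eq_generated by (auto intro: topology_generated_by_Basis)

lemma ISig_subbasis_maps_cls: "{g \<in> ISig S arR arF. maps_cls g a b} \<in> insert {} (ISig_subbasis S arR arF)"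
proof (cases "a \<in> S \<and> b \<in> S")
  case True
  then show ?thesis
    unfolding ISig_subbasis_def by blast
next
  case False
  then have "{g \<in> ISig S arR arF. maps_cls g a b} = {}"
    using ISig_MSig MSig_idom_subset by blast
  then show ?thesis
    by simp
qed

lemma topspace_ISig_top: "topspace (ISig_top S arR arF) = ISig S arR arF"
  unfolding ISig_top_def by auto

lemma IT_subset_ISig: "IT S arR arF T \<subseteq> ISig S arR arF"
  unfolding IT_def ISig_on_def using MT_subset_MSig by blast

lemma topspace_IT: "topspace (subtopology (ISig_top S arR arF) (IT S arR arF T)) = IT S arR arF T"
  using IT_subset_ISig[of S arR arF T] by (auto simp: topspace_ISig_top)

lemma IT_MT: "g \<in> IT S arR arF T \<Longrightarrow> isrc g \<in> MT S arR arF T \<and> itgt g \<in> MT S arR arF T"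
  unfolding IT_def ISig_on_def by blast

lemma continuous_map_IT_MT:
  assumes sel: "sel = isrc \<or> sel = itgt"
  shows "continuous_map (subtopology (ISig_top S arR arF) (IT S arR arF T))
    (subtopology (MSig_top S arR arF) (MT S arR arF T)) sel"
  unfolding continuous_map_def topspace_IT topspace_MT
proof (intro conjI allI impI)
  show "sel \<in> IT S arR arF T \<rightarrow> MT S arR arF T"
    using sel IT_MT by blast
next
  fix U
  assume "openin (subtopology (MSig_top S arR arF) (MT S arR arF T)) U"
  then obtain V where V: "openin (MSig_top S arR arF) V" "U = V \<inter> MT S arR arF T"
    unfolding openin_subtopology by blast
  have "{g \<in> ISig S arR arF. sel g \<in> V} \<in> ISig_subbasis S arR arF"
    using sel ISig_subbasis_isrc[OF V(1)] ISig_subbasis_itgt[OF V(1)] by blast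
  then have "openin (ISig_top S arR arF) {g \<in> ISig S arR arF. sel g \<in> V}"
    unfolding ISig_top_eq_generated by (rule topology_generated_by_Basis)
  moreover have "{g \<in> IT S arR arF T. sel g \<in> U} = {g \<in> ISig S arR arF. sel g \<in> V} \<inter> IT S arR arF T"
    using sel V(2) IT_subset_ISig IT_MT by blast
  ultimately show "openin (subtopology (ISig_top S arR arF) (IT S arR arF T)) {g \<in> IT S arR arF T. sel g \<in> U}"
    by (simp add: openin_subtopology_Int)
qed

context
  fixes S :: "'s set" and arR :: "'r \<Rightarrow> nat" and arF :: "'f \<Rightarrow> nat" and g :: "('s, 'r, 'f) iiso"
  assumes g: "g \<in> ISig S arR arF"
begin

lemma imap_inj: "inj_on (imap g) (univ (isrc g))"
  using ISig_is_iso[OF g] unfolding is_iso_def bij_betw_def by blast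

lemma imap_univ: "imap g ` univ (isrc g) = univ (itgt g)"
  using ISig_is_iso[OF g] unfolding is_iso_def bij_betw_def by blast

lemma maps_cls_ieq_iff:
  assumes "maps_cls g a b" "maps_cls g a' b'"
  shows "(a, a') \<in> ieq (isrc g) \<longleftrightarrow> (b, b') \<in> ieq (itgt g)"
proof -
  have K: "isrc g \<in> MSig S arR arF" and L: "itgt g \<in> MSig S arR arF"
    using ISig_MSig[OF g] by blast+
  have "(a, a') \<in> ieq (isrc g) \<longleftrightarrow> cls (isrc g) a = cls (isrc g) a'"
    using cls_eq_iff[OF K] assms by blast
  also have "\<dots> \<longleftrightarrow> imap g (cls (isrc g) a) = imap g (cls (isrc g) a')"
    using inj_on_eq_iff[OF imap_inj] cls_in_univ assms by metis
  also have "\<dots> \<longleftrightarrow> (b, b') \<in> ieq (itgt g)"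
    using cls_eq_iff[OF L] assms by simp
  finally show ?thesis .
qed

lemma list_all2_maps_cls:
  "list_all2 (maps_cls g) as bs \<Longrightarrow>
    set as \<subseteq> idom (isrc g) \<and> map (imap g) (map (cls (isrc g)) as) = map (cls (itgt g)) bs"
  by (induction rule: list_all2_induct) auto

lemma maps_cls_rel_cls_iff:
  assumes "list_all2 (maps_cls g) as bs" "length as = arR r"
  shows "rel_cls (isrc g) r as \<longleftrightarrow> rel_cls (itgt g) r bs"
proof -
  have "set (map (cls (isrc g)) as) \<subseteq> univ (isrc g)"
    using list_all2_maps_cls[OF assms(1)] by (auto intro: cls_in_univ)
  then show ?thesis
    using ISig_is_iso[OF g] assms(2) list_all2_maps_cls[OF assms(1)] unfolding is_iso_def by simp
qed

lemma maps_cls_fun_cls_iff: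
  assumes "list_all2 (maps_cls g) as bs" "maps_cls g a b" "length as = arF f"
  shows "fun_cls (isrc g) f as a \<longleftrightarrow> fun_cls (itgt g) f bs b"
proof -
  have K: "isrc g \<in> MSig S arR arF"
    using ISig_MSig[OF g] by blast
  have args: "set (map (cls (isrc g)) as) \<subseteq> univ (isrc g)"
    using list_all2_maps_cls[OF assms(1)] by (auto intro: cls_in_univ)
  have "ifun (isrc g) f (map (cls (isrc g)) as) \<in> univ (isrc g)"
    using MSig_ifun[OF K _ args] assms(3) by simp
  moreover have "cls (isrc g) a \<in> univ (isrc g)"
    using assms(2) by (simp add: cls_in_univ)
  ultimately have "ifun (isrc g) f (map (cls (isrc g)) as) = cls (isrc g) a \<longleftrightarrow>
      imap g (ifun (isrc g) f (map (cls (isrc g)) as)) = imap g (cls (isrc g) a)"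
    by (simp add: inj_on_eq_iff[OF imap_inj])
  also have "\<dots> \<longleftrightarrow> ifun (itgt g) f (map (cls (itgt g)) bs) = cls (itgt g) b"
    using ISig_is_iso[OF g] args assms(2,3) list_all2_maps_cls[OF assms(1)] unfolding is_iso_def by simp
  finally show ?thesis
    using assms(2) by simp
qed

end

lemma ISig_subbasis_T0:
  assumes g: "g \<in> ISig S arR arF" and g': "g' \<in> ISig S arR arF"
    and agree: "\<forall>G\<in>ISig_subbasis S arR arF. g \<in> G \<longleftrightarrow> g' \<in> G"
  shows "g = g'"
proof -
  note agree_on = inseparable_pred_iff[OF g g' agree]
  have agree_model: "sel g = sel g'" if sel: "sel = isrc \<or> sel = itgt" for sel
  proof (rule MSig_subbasis_T0)
    show "sel g \<in> MSig S arR arF" "sel g' \<in> MSig S arR arF"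
      using sel ISig_MSig g g' by blast+
    show "\<forall>G\<in>MSig_subbasis S arR arF. sel g \<in> G \<longleftrightarrow> sel g' \<in> G"
    proof
      fix G
      assume "G \<in> MSig_subbasis S arR arF"
      then have "openin (MSig_top S arR arF) G"
        by (intro openin_MSig_subbasis) blast
      then have "{h \<in> ISig S arR arF. sel h \<in> G} \<in> insert {} (ISig_subbasis S arR arF)"
        using sel ISig_subbasis_isrc ISig_subbasis_itgt by blast
      then show "sel g \<in> G \<longleftrightarrow> sel g' \<in> G"
        by (rule agree_on)
    qed
  qed
  have src: "isrc g = isrc g'" and tgt: "itgt g = itgt g'"
    using agree_model by blast+
  have "imap g X = imap g' X" for X
  proof (cases "X \<in> univ (isrc g)")
    case True
    then obtain a where a: "a \<in> idom (isrc g)" "X = cls (isrc g) a"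
      unfolding univ_eq_image_cls by blast
    have "imap g X \<in> univ (itgt g)"
      using ISig_is_iso[OF g] True unfolding is_iso_def bij_betw_def by blast
    then obtain b where b: "b \<in> idom (itgt g)" "imap g X = cls (itgt g) b"
      unfolding univ_eq_image_cls by blast
    have "maps_cls g a b \<longleftrightarrow> maps_cls g' a b"
      by (rule agree_on[OF ISig_subbasis_maps_cls])
    then show ?thesis
      using a b src tgt by simp
  next
    case False
    then show ?thesis
      using ISig_is_iso[OF g] ISig_is_iso[OF g'] src unfolding is_iso_def by metis
  qed
  then show ?thesis
    using src tgt by (intro iiso.equality) auto
qed

locale IT_filter = cp_filter "subtopology (ISig_top S arR arF) (IT S arR arF T)" F
  for S :: "'s set" and arR :: "'r \<Rightarrow> nat" and arF :: "'f \<Rightarrow> nat"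
    and T :: "('r, 'f, 'i) gseq set" and F :: "('s, 'r, 'f) iiso set set" +
  fixes M N :: "('s, 'r, 'f) istr"
  assumes M: "M \<in> MT S arR arF T" and N: "N \<in> MT S arR arF T"
    and isrc_point: "\<And>U. openin (subtopology (MSig_top S arR arF) (MT S arR arF T)) U \<Longrightarrow>
      {g \<in> IT S arR arF T. isrc g \<in> U} \<in> F \<longleftrightarrow> M \<in> U"
    and itgt_point: "\<And>U. openin (subtopology (MSig_top S arR arF) (MT S arR arF T)) U \<Longrightarrow>
      {g \<in> IT S arR arF T. itgt g \<in> U} \<in> F \<longleftrightarrow> N \<in> U"
begin

lemma M_MSig: "M \<in> MSig S arR arF" and N_MSig: "N \<in> MSig S arR arF"
  using M N MT_subset_MSig by blast+

lemma IT_ISig: "g \<in> IT S arR arF T \<Longrightarrow> g \<in> ISig S arR arF"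
  using IT_subset_ISig by blast

lemma open_pred_forces_sel:
  assumes sel: "(sel, K) = (isrc, M) \<or> (sel, K) = (itgt, N)"
    and P: "{L \<in> MSig S arR arF. P L} \<in> insert {} (MSig_subbasis S arR arF)"
  shows "open_pred (\<lambda>g. P (sel g))" "forces (\<lambda>g. P (sel g)) \<longleftrightarrow> P K"
proof -
  let ?U = "{L \<in> MT S arR arF T. P L}"
  have "?U = {L \<in> MSig S arR arF. P L} \<inter> MT S arR arF T"
    using MT_subset_MSig by blast
  then have U: "openin (subtopology (MSig_top S arR arF) (MT S arR arF T)) ?U"
    using openin_MSig_subbasis[OF P] by (simp add: openin_subtopology_Int)
  have pre: "{g \<in> IT S arR arF T. sel g \<in> ?U} = {g \<in> IT S arR arF T. P (sel g)}"
    using sel IT_MT by blast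
  have "continuous_map (subtopology (ISig_top S arR arF) (IT S arR arF T))
      (subtopology (MSig_top S arR arF) (MT S arR arF T)) sel"
    using sel by (intro continuous_map_IT_MT) blast
  from openin_continuous_map_preimage[OF this U]
  show "open_pred (\<lambda>g. P (sel g))"
    unfolding open_pred_def topspace_IT pre .
  have "{g \<in> IT S arR arF T. sel g \<in> ?U} \<in> F \<longleftrightarrow> K \<in> ?U"
    using sel isrc_point[OF U] itgt_point[OF U] by blast
  moreover have "K \<in> MT S arR arF T"
    using sel M N by blast
  ultimately show "forces (\<lambda>g. P (sel g)) \<longleftrightarrow> P K"
    unfolding forces_def topspace_IT pre[symmetric] by simp
qed

lemma open_pred_isrc: "{L \<in> MSig S arR arF. P L} \<in> insert {} (MSig_subbasis S arR arF) \<Longrightarrow> open_pred (\<lambda>g. P (isrc g))"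
  and forces_isrc_iff: "{L \<in> MSig S arR arF. P L} \<in> insert {} (MSig_subbasis S arR arF) \<Longrightarrow> forces (\<lambda>g. P (isrc g)) \<longleftrightarrow> P M"
  and open_pred_itgt: "{L \<in> MSig S arR arF. P L} \<in> insert {} (MSig_subbasis S arR arF) \<Longrightarrow> open_pred (\<lambda>g. P (itgt g))"
  and forces_itgt_iff: "{L \<in> MSig S arR arF. P L} \<in> insert {} (MSig_subbasis S arR arF) \<Longrightarrow> forces (\<lambda>g. P (itgt g)) \<longleftrightarrow> P N"
  using open_pred_forces_sel[of isrc M P] open_pred_forces_sel[of itgt N P] by simp_all

lemma forces_mono_ISig:
  "forces P \<Longrightarrow> (\<And>g. g \<in> ISig S arR arF \<Longrightarrow> P g \<Longrightarrow> Q g) \<Longrightarrow> open_pred Q \<Longrightarrow> forces Q"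
  using forces_mono IT_ISig unfolding topspace_IT by blast

lemma open_pred_maps_cls: "open_pred (\<lambda>g. maps_cls g a b)"
proof -
  have "{g \<in> IT S arR arF T. maps_cls g a b} = {g \<in> ISig S arR arF. maps_cls g a b} \<inter> IT S arR arF T"
    using IT_ISig by blast
  moreover have "openin (ISig_top S arR arF) {g \<in> ISig S arR arF. maps_cls g a b}"
    by (rule openin_ISig_subbasis[OF ISig_subbasis_maps_cls])
  ultimately show ?thesis
    unfolding open_pred_def topspace_IT by (simp add: openin_subtopology_Int)
qed

lemma forces_maps_cls_idom:
  assumes "forces (\<lambda>g. maps_cls g a b)"
  shows "a \<in> idom M" "b \<in> idom N"
proof -
  have "forces (\<lambda>g. a \<in> idom (isrc g))"
    using assms by (rule forces_mono_ISig) (simp_all add: open_pred_isrc[OF MSig_subbasis_idom])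
  then show "a \<in> idom M"
    using forces_isrc_iff[OF MSig_subbasis_idom] by blast
  have "forces (\<lambda>g. b \<in> idom (itgt g))"
    using assms by (rule forces_mono_ISig) (simp_all add: open_pred_itgt[OF MSig_subbasis_idom])
  then show "b \<in> idom N"
    using forces_itgt_iff[OF MSig_subbasis_idom] by blast
qed

lemma maps_cls_exists:
  assumes "a \<in> idom M"
  shows "\<exists>b. forces (\<lambda>g. maps_cls g a b)"
proof -
  have "forces (\<lambda>g. a \<in> idom (isrc g))"
    using assms forces_isrc_iff[OF MSig_subbasis_idom] by blast
  then have "forces (\<lambda>g. \<exists>b\<in>UNIV. maps_cls g a b)"
  proof (rule forces_mono_ISig)
    fix g
    assume g: "g \<in> ISig S arR arF" "a \<in> idom (isrc g)"
    then have "imap g (cls (isrc g) a) \<in> univ (itgt g)"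
      using imap_univ[OF g(1)] cls_in_univ[OF g(2)] by blast
    then show "\<exists>b\<in>UNIV. maps_cls g a b"
      using g(2) unfolding univ_eq_image_cls by auto
  qed (intro open_pred_ex open_pred_maps_cls)
  then show ?thesis
    unfolding forces_ex_iff[OF open_pred_maps_cls] by blast
qed

lemma maps_cls_exists_inv:
  assumes "b \<in> idom N"
  shows "\<exists>a. forces (\<lambda>g. maps_cls g a b)"
proof -
  have "forces (\<lambda>g. b \<in> idom (itgt g))"
    using assms forces_itgt_iff[OF MSig_subbasis_idom] by blast
  then have "forces (\<lambda>g. \<exists>a\<in>UNIV. maps_cls g a b)"
  proof (rule forces_mono_ISig)
    fix g
    assume g: "g \<in> ISig S arR arF" "b \<in> idom (itgt g)"
    then have "cls (itgt g) b \<in> imap g ` univ (isrc g)"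
      using imap_univ[OF g(1)] cls_in_univ[OF g(2)] by blast
    then show "\<exists>a\<in>UNIV. maps_cls g a b"
      using g(2) unfolding univ_eq_image_cls by auto
  qed (intro open_pred_ex open_pred_maps_cls)
  then show ?thesis
    unfolding forces_ex_iff[OF open_pred_maps_cls] by blast
qed

lemma forces_maps_cls_ieq_iff:
  assumes "forces (\<lambda>g. maps_cls g a b)" "forces (\<lambda>g. maps_cls g a' b')"
  shows "(a, a') \<in> ieq M \<longleftrightarrow> (b, b') \<in> ieq N"
proof -
  have "forces (\<lambda>g. maps_cls g a b \<and> maps_cls g a' b')"
    using assms forces_conj_iff[OF open_pred_maps_cls open_pred_maps_cls] by blast
  then have "forces (\<lambda>g. (a, a') \<in> ieq (isrc g)) \<longleftrightarrow> forces (\<lambda>g. (b, b') \<in> ieq (itgt g))"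
  proof (rule forces_iff_on)
    fix g
    assume g: "g \<in> topspace (subtopology (ISig_top S arR arF) (IT S arR arF T))"
      and maps: "maps_cls g a b \<and> maps_cls g a' b'"
    have "g \<in> ISig S arR arF"
      using g IT_ISig unfolding topspace_IT by blast
    then show "(a, a') \<in> ieq (isrc g) \<longleftrightarrow> (b, b') \<in> ieq (itgt g)"
      by (rule maps_cls_ieq_iff) (use maps in blast)+
  qed (intro open_pred_conj open_pred_maps_cls open_pred_isrc[OF MSig_subbasis_ieq]
      open_pred_itgt[OF MSig_subbasis_ieq])+
  then show ?thesis
    using forces_isrc_iff[OF MSig_subbasis_ieq] forces_itgt_iff[OF MSig_subbasis_ieq] by blast
qed

lemma maps_cls_transport:
  assumes "forces (\<lambda>g. maps_cls g a b)" "(a, a') \<in> ieq M" "(b, b') \<in> ieq N"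
  shows "forces (\<lambda>g. maps_cls g a' b')"
proof -
  note open_src = open_pred_isrc[OF MSig_subbasis_ieq] and open_tgt = open_pred_itgt[OF MSig_subbasis_ieq]
  have "forces (\<lambda>g. (a, a') \<in> ieq (isrc g))" "forces (\<lambda>g. (b, b') \<in> ieq (itgt g))"
    using assms(2,3) forces_isrc_iff[OF MSig_subbasis_ieq] forces_itgt_iff[OF MSig_subbasis_ieq] by blast+
  then have "forces (\<lambda>g. (a, a') \<in> ieq (isrc g) \<and> (b, b') \<in> ieq (itgt g))"
    by (rule forces_conj_iff[OF open_src open_tgt, THEN iffD2, OF conjI])
  then have "forces (\<lambda>g. maps_cls g a b \<and> ((a, a') \<in> ieq (isrc g) \<and> (b, b') \<in> ieq (itgt g)))"
    using assms(1) by (intro forces_conj_iff[OF open_pred_maps_cls open_pred_conj[OF open_src open_tgt],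
          THEN iffD2] conjI)
  then show ?thesis
  proof (rule forces_mono_ISig)
    fix g
    assume g: "g \<in> ISig S arR arF" "maps_cls g a b \<and> ((a, a') \<in> ieq (isrc g) \<and> (b, b') \<in> ieq (itgt g))"
    then have "isrc g \<in> MSig S arR arF" "itgt g \<in> MSig S arR arF"
      using ISig_MSig by blast+
    then show "maps_cls g a' b'"
      using g(2) cls_eq_if_ieq ieq_idom by metis
  qed (rule open_pred_maps_cls)
qed

definition iso_map :: "'s set \<Rightarrow> 's set" where
  "iso_map X = {b. \<exists>a. cls M a = X \<and> forces (\<lambda>g. maps_cls g a b)}"

lemma iso_map_cls:
  assumes ab: "forces (\<lambda>g. maps_cls g a b)"
  shows "iso_map (cls M a) = cls N b"
proof (intro set_eqI iffI)
  fix c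
  assume "c \<in> iso_map (cls M a)"
  then obtain a' where a': "cls M a' = cls M a" "forces (\<lambda>g. maps_cls g a' c)"
    unfolding iso_map_def by blast
  have "(a', a) \<in> ieq M"
    using a'(1) cls_eq_iff[OF M_MSig forces_maps_cls_idom(1)[OF a'(2)] forces_maps_cls_idom(1)[OF ab]]
    by simp
  then have "(c, b) \<in> ieq N"
    using forces_maps_cls_ieq_iff[OF a'(2) ab] by simp
  then show "c \<in> cls N b"
    using ieq_sym[OF N_MSig] unfolding cls_def by simp
next
  fix c
  assume "c \<in> cls N b"
  then have "(b, c) \<in> ieq N"
    unfolding cls_def by simp
  then have "forces (\<lambda>g. maps_cls g a c)"
    by (rule maps_cls_transport[OF ab ieq_refl[OF M_MSig forces_maps_cls_idom(1)[OF ab]]])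
  then show "c \<in> iso_map (cls M a)"
    unfolding iso_map_def by blast
qed

lemma forces_maps_cls_iff:
  "forces (\<lambda>g. maps_cls g a b) \<longleftrightarrow> a \<in> idom M \<and> b \<in> idom N \<and> iso_map (cls M a) = cls N b"
proof
  assume "forces (\<lambda>g. maps_cls g a b)"
  then show "a \<in> idom M \<and> b \<in> idom N \<and> iso_map (cls M a) = cls N b"
    using forces_maps_cls_idom iso_map_cls by simp
next
  assume H: "a \<in> idom M \<and> b \<in> idom N \<and> iso_map (cls M a) = cls N b"
  then obtain b' where b': "forces (\<lambda>g. maps_cls g a b')"
    using maps_cls_exists by blast
  have "cls N b' = cls N b"
    using iso_map_cls[OF b'] H by simp
  then have "(b', b) \<in> ieq N"
    using cls_eq_iff[OF N_MSig forces_maps_cls_idom(2)[OF b']] H by simp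
  moreover have "(a, a) \<in> ieq M"
    using ieq_refl[OF M_MSig] H by blast
  ultimately show "forces (\<lambda>g. maps_cls g a b)"
    using maps_cls_transport[OF b'] by blast
qed

lemma iso_map_outside:
  assumes "X \<notin> univ M"
  shows "iso_map X = {}"
proof -
  have "cls M a \<noteq> X" if "forces (\<lambda>g. maps_cls g a b)" for a b
    using assms cls_in_univ[OF forces_maps_cls_idom(1)[OF that]] by blast
  then show ?thesis
    unfolding iso_map_def by blast
qed

lemma maps_cls_exists_list:
  "set as \<subseteq> idom M \<Longrightarrow> \<exists>bs. list_all2 (\<lambda>a b. forces (\<lambda>g. maps_cls g a b)) as bs"
proof (induction as)
  case (Cons a as)
  then obtain b bs where "forces (\<lambda>g. maps_cls g a b)" "list_all2 (\<lambda>a b. forces (\<lambda>g. maps_cls g a b)) as bs"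
    using maps_cls_exists by fastforce
  then show ?case
    by blast
qed (use list.rel_intros(1) in blast)

lemma map_iso_map:
  "list_all2 (\<lambda>a b. forces (\<lambda>g. maps_cls g a b)) as bs \<Longrightarrow> map iso_map (map (cls M) as) = map (cls N) bs"
  by (induction rule: list_all2_induct) (simp_all add: iso_map_cls)

lemma forces_list_maps_cls:
  "list_all2 (\<lambda>a b. forces (\<lambda>g. maps_cls g a b)) as bs \<Longrightarrow> forces (\<lambda>g. list_all2 (maps_cls g) as bs)"
  using forces_list_all2_iff[where P = maps_cls] open_pred_maps_cls by blast

lemma open_pred_list_maps_cls: "open_pred (\<lambda>g. list_all2 (maps_cls g) as bs)"
  using open_pred_list_all2[where P = maps_cls] open_pred_maps_cls by blast

lemma iso_map_bij: "bij_betw iso_map (univ M) (univ N)"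
proof (rule bij_betw_imageI)
  show "inj_on iso_map (univ M)"
  proof (rule inj_onI)
    fix X Y
    assume "X \<in> univ M" "Y \<in> univ M" and eq: "iso_map X = iso_map Y"
    then obtain a a' where a: "a \<in> idom M" "X = cls M a" and a': "a' \<in> idom M" "Y = cls M a'"
      unfolding univ_eq_image_cls by blast
    obtain b b' where b: "forces (\<lambda>g. maps_cls g a b)" and b': "forces (\<lambda>g. maps_cls g a' b')"
      using maps_cls_exists a(1) a'(1) by blast
    have "cls N b = cls N b'"
      using eq iso_map_cls[OF b] iso_map_cls[OF b'] a(2) a'(2) by simp
    then have "(b, b') \<in> ieq N"
      using cls_eq_iff[OF N_MSig forces_maps_cls_idom(2)[OF b] forces_maps_cls_idom(2)[OF b']] by simp
    then have "(a, a') \<in> ieq M"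
      using forces_maps_cls_ieq_iff[OF b b'] by simp
    then show "X = Y"
      using a(2) a'(2) cls_eq_if_ieq[OF M_MSig] by simp
  qed
  show "iso_map ` univ M = univ N"
  proof (intro equalityI subsetI)
    fix Y
    assume "Y \<in> iso_map ` univ M"
    then obtain a where a: "a \<in> idom M" "Y = iso_map (cls M a)"
      unfolding univ_eq_image_cls by blast
    then obtain b where b: "forces (\<lambda>g. maps_cls g a b)"
      using maps_cls_exists by blast
    have "Y = cls N b"
      using a(2) iso_map_cls[OF b] by simp
    then show "Y \<in> univ N"
      using cls_in_univ[OF forces_maps_cls_idom(2)[OF b]] by simp
  next
    fix Y
    assume "Y \<in> univ N"
    then obtain b where b: "b \<in> idom N" "Y = cls N b"
      unfolding univ_eq_image_cls by blast
    then obtain a where a: "forces (\<lambda>g. maps_cls g a b)"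
      using maps_cls_exists_inv by blast
    have "Y = iso_map (cls M a)"
      using b(2) iso_map_cls[OF a] by simp
    then show "Y \<in> iso_map ` univ M"
      using cls_in_univ[OF forces_maps_cls_idom(1)[OF a]] by blast
  qed
qed

lemma iso_map_irel:
  assumes "length xs = arR r" "set xs \<subseteq> univ M"
  shows "xs \<in> irel M r \<longleftrightarrow> map iso_map xs \<in> irel N r"
proof -
  obtain as where as: "set as \<subseteq> idom M" "xs = map (cls M) as"
    using lists_univ_eq_map_cls[OF assms(2)] by blast
  then obtain bs where bs: "list_all2 (\<lambda>a b. forces (\<lambda>g. maps_cls g a b)) as bs"
    using maps_cls_exists_list by blast
  have "forces (\<lambda>g. rel_cls (isrc g) r as) \<longleftrightarrow> forces (\<lambda>g. rel_cls (itgt g) r bs)"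
  proof (rule forces_iff_on[OF forces_list_maps_cls[OF bs]])
    fix g
    assume "g \<in> topspace (subtopology (ISig_top S arR arF) (IT S arR arF T))"
      and maps: "list_all2 (maps_cls g) as bs"
    then have "g \<in> ISig S arR arF"
      using IT_ISig unfolding topspace_IT by blast
    then show "rel_cls (isrc g) r as \<longleftrightarrow> rel_cls (itgt g) r bs"
      by (rule maps_cls_rel_cls_iff[OF _ maps]) (use assms(1) as(2) in simp)
  qed (intro open_pred_list_maps_cls open_pred_isrc open_pred_itgt MSig_subbasis_irel)+
  then show ?thesis
    unfolding forces_isrc_iff[OF MSig_subbasis_irel] forces_itgt_iff[OF MSig_subbasis_irel]
    using as(2) map_iso_map[OF bs] by simp
qed

lemma iso_map_ifun:
  assumes "length xs = arF f" "set xs \<subseteq> univ M"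
  shows "iso_map (ifun M f xs) = ifun N f (map iso_map xs)"
proof -
  obtain as where as: "set as \<subseteq> idom M" "xs = map (cls M) as"
    using lists_univ_eq_map_cls[OF assms(2)] by blast
  then obtain bs where bs: "list_all2 (\<lambda>a b. forces (\<lambda>g. maps_cls g a b)) as bs"
    using maps_cls_exists_list by blast
  have "ifun M f xs \<in> univ M"
    using MSig_ifun[OF M_MSig assms] .
  then obtain a where a: "a \<in> idom M" "ifun M f xs = cls M a"
    unfolding univ_eq_image_cls by blast
  then obtain b where b: "forces (\<lambda>g. maps_cls g a b)"
    using maps_cls_exists by blast
  have W: "forces (\<lambda>g. list_all2 (maps_cls g) as bs \<and> maps_cls g a b)"
    using forces_list_maps_cls[OF bs] b
    by (intro forces_conj_iff[OF open_pred_list_maps_cls open_pred_maps_cls, THEN iffD2] conjI)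
  have "forces (\<lambda>g. fun_cls (isrc g) f as a) \<longleftrightarrow> forces (\<lambda>g. fun_cls (itgt g) f bs b)"
  proof (rule forces_iff_on[OF W])
    fix g
    assume "g \<in> topspace (subtopology (ISig_top S arR arF) (IT S arR arF T))"
      and maps: "list_all2 (maps_cls g) as bs \<and> maps_cls g a b"
    then have "g \<in> ISig S arR arF"
      using IT_ISig unfolding topspace_IT by blast
    then show "fun_cls (isrc g) f as a \<longleftrightarrow> fun_cls (itgt g) f bs b"
      using maps by (intro maps_cls_fun_cls_iff) (use assms(1) as(2) in auto)
  qed (intro open_pred_conj open_pred_list_maps_cls open_pred_maps_cls open_pred_isrc open_pred_itgt
      MSig_subbasis_ifun)+
  then have "fun_cls N f bs b"
    unfolding forces_isrc_iff[OF MSig_subbasis_ifun] forces_itgt_iff[OF MSig_subbasis_ifun]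
    using a as(2) by simp
  then show ?thesis
    using a(2) iso_map_cls[OF b] map_iso_map[OF bs] as(2) by simp
qed

lemma iso_map_is_iso: "is_iso arR arF M N iso_map"
  unfolding is_iso_def using iso_map_bij iso_map_outside iso_map_irel iso_map_ifun by blast

definition iso_point :: "('s, 'r, 'f) iiso" where
  "iso_point = \<lparr>isrc = M, itgt = N, imap = iso_map\<rparr>"

lemma iso_point_IT: "iso_point \<in> IT S arR arF T"
  unfolding iso_point_def IT_def ISig_on_def using M N iso_map_is_iso by simp

lemma ISig_subbasis_mem_iff:
  assumes "G \<in> ISig_subbasis S arR arF"
  shows "G \<inter> IT S arR arF T \<in> F \<longleftrightarrow> iso_point \<in> G"
proof -
  have point: "iso_point \<in> ISig S arR arF"
    using iso_point_IT IT_ISig by blast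
  have sel_iff: "{g \<in> ISig S arR arF. sel g \<in> U} \<inter> IT S arR arF T \<in> F \<longleftrightarrow> K \<in> U"
    if sel: "(sel, K) = (isrc, M) \<or> (sel, K) = (itgt, N)" and U: "openin (MSig_top S arR arF) U" for sel K U
  proof -
    have eq: "{g \<in> ISig S arR arF. sel g \<in> U} \<inter> IT S arR arF T =
        {g \<in> IT S arR arF T. sel g \<in> U \<inter> MT S arR arF T}"
      using sel IT_ISig IT_MT by blast
    have "openin (subtopology (MSig_top S arR arF) (MT S arR arF T)) (U \<inter> MT S arR arF T)"
      using U by (rule openin_subtopology_Int)
    then have "{g \<in> IT S arR arF T. sel g \<in> U \<inter> MT S arR arF T} \<in> F \<longleftrightarrow> K \<in> U \<inter> MT S arR arF T"
      using sel isrc_point itgt_point by blast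
    moreover have "K \<in> MT S arR arF T"
      using sel M N by blast
    ultimately show ?thesis
      unfolding eq by blast
  qed
  from assms show ?thesis
  proof (cases rule: ISig_subbasisE)
    case 1
    then have "G \<inter> IT S arR arF T = topspace (subtopology (ISig_top S arR arF) (IT S arR arF T))"
      using IT_subset_ISig unfolding topspace_IT by blast
    then show ?thesis
      using 1 point topspace_mem by simp
  next
    case (2 U)
    then show ?thesis
      using sel_iff[of isrc M U] point by (simp add: iso_point_def)
  next
    case (3 U)
    then show ?thesis
      using sel_iff[of itgt N U] point by (simp add: iso_point_def)
  next
    case (4 a b)
    then have "G \<inter> IT S arR arF T = {g \<in> topspace (subtopology (ISig_top S arR arF) (IT S arR arF T)). maps_cls g a b}"
      using IT_ISig unfolding topspace_IT by blast
    then show ?thesis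
      using 4 point forces_maps_cls_iff unfolding forces_def by (simp add: iso_point_def)
  qed
qed

end

theorem sober_IT:
  assumes "geometric_theory arR arF T"
  shows "sober (subtopology (ISig_top S arR arF) (IT S arR arF T))"
  unfolding ISig_top_eq_generated
proof (rule sober_subtopology_generated_by)
  have "ISig S arR arF \<in> ISig_subbasis S arR arF"
    unfolding ISig_subbasis_def by blast
  then have "ISig S arR arF \<subseteq> \<Union> (ISig_subbasis S arR arF)"
    by (rule Union_upper)
  then show "IT S arR arF T \<subseteq> \<Union> (ISig_subbasis S arR arF)"
    by (rule subset_trans[OF IT_subset_ISig])
next
  fix g g'
  assume "g \<in> IT S arR arF T" "g' \<in> IT S arR arF T"
    and agree: "\<forall>G\<in>ISig_subbasis S arR arF. g \<in> G \<longleftrightarrow> g' \<in> G"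
  then show "g = g'"
    by (intro ISig_subbasis_T0[OF _ _ agree] subsetD[OF IT_subset_ISig])
next
  fix F
  assume "cp_filter (subtopology (topology_generated_by (ISig_subbasis S arR arF)) (IT S arR arF T)) F"
  then have F: "cp_filter (subtopology (ISig_top S arR arF) (IT S arR arF T)) F"
    unfolding ISig_top_eq_generated .
  have "sober (subtopology (MSig_top S arR arF) (MT S arR arF T))"
    using assms by (rule sober_MT)
  then obtain M N where
    "M \<in> MT S arR arF T" "\<And>U. openin (subtopology (MSig_top S arR arF) (MT S arR arF T)) U \<Longrightarrow>
      {g \<in> IT S arR arF T. isrc g \<in> U} \<in> F \<longleftrightarrow> M \<in> U"
    "N \<in> MT S arR arF T" "\<And>U. openin (subtopology (MSig_top S arR arF) (MT S arR arF T)) U \<Longrightarrow>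
      {g \<in> IT S arR arF T. itgt g \<in> U} \<in> F \<longleftrightarrow> N \<in> U"
    using continuous_map_sober_point[OF continuous_map_IT_MT _ F, of isrc]
      continuous_map_sober_point[OF continuous_map_IT_MT _ F, of itgt]
    unfolding topspace_IT topspace_MT by blast
  then interpret IT_filter S arR arF T F M N
    using F by (intro IT_filter.intro IT_filter_axioms.intro) (simp_all add: cp_filter_def)
  show "\<exists>g\<in>IT S arR arF T. \<forall>G\<in>ISig_subbasis S arR arF. G \<inter> IT S arR arF T \<in> F \<longleftrightarrow> g \<in> G"
    using iso_point_IT ISig_subbasis_mem_iff by blast
qed

theorem proposition2p6:
  fixes S :: "'s set" and arR :: "'r \<Rightarrow> nat" and arF :: "'f \<Rightarrow> nat"
    and T :: "('r, 'f, 'i) gseq set"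
  assumes "infinite S"
    and "\<exists>g :: 'r + 'f \<Rightarrow> 's. inj g \<and> range g \<subseteq> S"
    and "geometric_theory arR arF T"
  shows "sober (subtopology (MSig_top S arR arF) (MT S arR arF T)) \<and>
         sober (subtopology (ISig_top S arR arF) (IT S arR arF T))"
  using sober_MT[OF assms(3)] sober_IT[OF assms(3)] by (rule conjI)

end
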